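(* Under the setting and assumptions in the context, the intra-cluster dynamics $\dot x_{\text{intra}}=F(x_{\text{intra}})+G(x_{\text{intra}},x_{\text{inter}})$ satisfy the following. (i) The Jacobian of $F$ at the origin is block diagonal: $$J_{\text{intra}}=\left.\frac{\partial F}{\partial x_{\text{intra}}}\right|_{x_{\text{intra}}=0}=\mathrm{blkdiag}(J_1,\dots,J_m),$$ where for $k=1,\dots,m$ $$J_k=-B_{\text{span},k}^\top B_k\,\mathrm{diag}(\{a_{ij}\}_{(i,j)\in\mathcal E_k})\,T_{\text{intra},k}.$$ Moreover, $J_{\text{intra}}$ is Hurwitz. Consequently, the origin is an exponentially stable equilibrium of $\dot x_{\text{intra}}=F(x_{\text{intra}})$. (ii) For all $k\in\{1,\dots,m\}$ and all $(x_{\text{intra}},x_{\text{inter}})$, $$\|G^{(k)}(x_{\text{intra}},x_{\text{inter}})\|\le\sum_{\ell=1}^m\gamma^{(k\ell)}\|x_{\text{intra}}^{(\ell)}\|,$$ with $\gamma^{(k\ell)}=2\max_r n_{\text{intra},r}\,\tilde\gamma^{(k\ell)}$. Here $n_{\text{intra},r}=|\mathcal P_r|-1$, and for any $i\in\mathcal P_k$: - if $\ell\neq k$, then $\tilde\gamma^{(k\ell)}=\sum_{j\in\mathcal P_\ell}a_{ij}$; - if $\ell=k$, then $\tilde\gamma^{(kk)}=\sum_{\ell'\ne k}\sum_{j\in\mathcal P_{\ell'}}a_{ij}$. By (A3), these quantities do not depend on the choice of $i\in\mathcal P_k$.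
   Context: **Graph and dynamics.** Let $\mathcal G=(\mathcal V,\mathcal E)$ be a connected, undirected, weighted graph with $\mathcal V=\{1,\dots,n\}$ and no self-loops. Its weighted adjacency matrix $A=[a_{ij}]$ is symmetric, with $a_{ij}=a_{ji}>0$ if $(i,j)\in\mathcal E$ and $a_{ij}=0$ otherwise. The Kuramoto dynamics are $$\dot\theta_i=\omega_i+\sum_{j\neq i}a_{ij}\sin(\theta_j-\theta_i),\qquad i\in\mathcal V,$$ with phases $\theta_i\in\mathbb S^1$ and natural frequencies $\omega_i>0$. **Partition and standing assumptions.** Let $\mathcal P=\{\mathcal P_1,\dots,\mathcal P_m\}$, $m>1$, be a partition of $\mathcal V$. The standing assumptions are: - (A2) $\omega_i=\omega_j$ whenever $i,j$ belong to the same cluster $\mathcal P_k$; - (A3) $\sum_{k\in\mathcal P_\ell}(a_{ik}-a_{jk})=0$ for all $i,j\in\mathcal P_z$ and all $z\neq\ell$. **Subgraphs and spanning trees.** Let $\mathcal G_k=(\mathcal P_k,\mathcal E_k)$ be the subgraph of $\mathcal G$ induced by $\mathcal P_k$; it is assumed connected. Let $\mathcal T_k=(\mathcal P_k,\mathcal E_{\text{span},k})$ be a spanning tree of $\mathcal G_k$. Let $\mathcal T=(\mathcal V,\mathcal E_{\mathcal T})$ be a spanning tree of $\mathcal G$ with $\mathcal E_{\mathcal T}=\bigcup_k\mathcal E_{\text{span},k}\cup\mathcal E_{\text{inter}}$, where $|\mathcal E_{\text{inter}}|=m-1$. **Phase differences.** Write $x_{ij}=\theta_j-\theta_i$. - $x_{\text{intra}}^{(k)}$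 is the vector of $x_{ij}$ over $(i,j)\in\mathcal E_{\text{span},k}$ with $i<j$; it has $n_{\text{intra},k}=|\mathcal P_k|-1$ entries. - $x_{\text{intra}}=[x_{\text{intra}}^{(1)\top},\dots,x_{\text{intra}}^{(m)\top}]^\top$. - $x_{\text{inter}}$ is the vector of $x_{ij}$ over $(i,j)\in\mathcal E_{\text{inter}}$ with $i<j$. **Path differences.** For nodes $i,j$, let $\mathrm p(i,j)=(p_1,\dots,p_\ell)$ be the unique path in $\mathcal T$ from $i$ to $j$. Define $\mathrm{diff}(\mathrm p(i,j))=\sum_{r=1}^{\ell-1}s_r$, where $s_r=x_{p_rp_{r+1}}$ if $p_r<p_{r+1}$ and $s_r=-x_{p_{r+1}p_r}$ otherwise. Then $x_{ij}=\mathrm{diff}(\mathrm p(i,j))$ is a linear function of $(x_{\text{intra}},x_{\text{inter}})$. **Intra-cluster dynamics.** For $(i,j)\in\mathcal E_{\text{span},k}$ with $i<j$, $\dot x_{ij}=F^{(k)}_{ij}+G^{(k)}_{ij}$, where $$F^{(k)}_{ij}(x_{\text{intra}}^{(k)})=\sum_{z\in\mathcal P_k}\big[a_{jz}\sin(\mathrm{diff}(\mathrm p(j,z)))-a_{iz}\sin(\mathrm{diff}(\mathrm p(i,z)))\big],$$ $$G^{(k)}_{ij}(x_{\text{intra}},x_{\text{inter}})=\sum_{z\notin\mathcal P_k}\big[a_{jz}\sin(\mathrm{diff}(\mathrm p(j,z)))-a_{iz}\sin(\mathrm{diff}(\mathrm p(i,z)))\big].$$ $F^{(k)},G^{(k)}$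 are the vectors of these entries, and $F,G$ are their stacks over $k$, so that $\dot x_{\text{intra}}=F(x_{\text{intra}})+G(x_{\text{intra}},x_{\text{inter}})$. **Incidence matrices.** For a graph with ordered edge list, its oriented incidence matrix has entry $(v,e)$ equal to $-1$ if $v$ is the smaller-index endpoint of edge $e$, $+1$ if $v$ is the larger-index endpoint, and $0$ otherwise. $B_k$ and $B_{\text{span},k}$ are the incidence matrices of $\mathcal G_k$ and $\mathcal T_k$. Define $T_{\text{intra},k}=B_k^\top(B_{\text{span},k}^\top)^\dagger$, where $\dagger$ is the Moore–Penrose pseudoinverse. It maps $x_{\text{intra}}^{(k)}$ to the vector $B_k^\top\theta^{(k)}$ of all phase differences over edges of $\mathcal G_k$. *)

theory Defs
  imports "HOL-Analysis.Analysis"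
begin

definition graph_edges :: "(nat \<Rightarrow> nat \<Rightarrow> real) \<Rightarrow> nat set \<Rightarrow> (nat \<times> nat) set" where
  "graph_edges a V = {(i,j). i \<in> V \<and> j \<in> V \<and> i < j \<and> a i j > 0}"

definition ug_connected :: "nat set \<Rightarrow> (nat \<times> nat) set \<Rightarrow> bool" where
  "ug_connected V E \<longleftrightarrow>
     (\<forall>u\<in>V. \<forall>v\<in>V. (u,v) \<in> ((E \<union> E\<inverse>) \<inter> (V \<times> V))\<^sup>*)"

definition is_spanning_tree :: "nat set \<Rightarrow> (nat \<times> nat) set \<Rightarrow> (nat \<times> nat) set \<Rightarrow> bool" where
  "is_spanning_tree V E T \<longleftrightarrow> T \<subseteq> E \<and> ug_connected V T \<and> card T = card V - 1"

definition cluster :: "nat \<Rightarrow> (nat \<Rightarrow> nat) \<Rightarrow> nat \<Rightarrow> nat set" where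
  "cluster n c k = {i. i < n \<and> c i = k}"

definition is_tree_path :: "(nat \<times> nat) set \<Rightarrow> nat \<Rightarrow> nat \<Rightarrow> nat list \<Rightarrow> bool" where
  "is_tree_path T i j p \<longleftrightarrow> p \<noteq> [] \<and> hd p = i \<and> last p = j \<and> distinct p \<and>
     (\<forall>r. Suc r < length p \<longrightarrow> (p!r, p!Suc r) \<in> T \<or> (p!Suc r, p!r) \<in> T)"

definition path_diff :: "(nat \<times> nat \<Rightarrow> real) \<Rightarrow> nat list \<Rightarrow> real" where
  "path_diff x p = (\<Sum>r<length p - 1.
      if p!r < p!Suc r then x (p!r, p!Suc r) else - x (p!Suc r, p!r))"

text \<open>diff(p(i,j)) for the unique path p(i,j) from i to j in the tree T.\<close>
definition tdiff :: "(nat \<times> nat) set \<Rightarrow> (nat \<times> nat \<Rightarrow> real) \<Rightarrow> nat \<Rightarrow> nat \<Rightarrow> real" where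
  "tdiff T x i j = path_diff x (THE p. is_tree_path T i j p)"

definition ext_edges :: "(nat \<times> nat) set \<Rightarrow> (nat \<times> nat \<Rightarrow> real) \<Rightarrow> nat \<times> nat \<Rightarrow> real" where
  "ext_edges S x = (\<lambda>e. if e \<in> S then x e else 0)"

definition Fcomp :: "nat \<Rightarrow> (nat \<Rightarrow> nat) \<Rightarrow> (nat \<Rightarrow> nat \<Rightarrow> real) \<Rightarrow> (nat \<times> nat) set
    \<Rightarrow> (nat \<times> nat \<Rightarrow> real) \<Rightarrow> nat \<times> nat \<Rightarrow> real" where
  "Fcomp n c a T y e = (\<Sum>z\<in>cluster n c (c (fst e)).
      a (snd e) z * sin (tdiff T y (snd e) z) - a (fst e) z * sin (tdiff T y (fst e) z))"

definition Gcomp :: "nat \<Rightarrow> (nat \<Rightarrow> nat) \<Rightarrow> (nat \<Rightarrow> nat \<Rightarrow> real) \<Rightarrow> (nat \<times> nat) set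
    \<Rightarrow> (nat \<times> nat \<Rightarrow> real) \<Rightarrow> nat \<times> nat \<Rightarrow> real" where
  "Gcomp n c a T y e = (\<Sum>z\<in>{..<n} - cluster n c (c (fst e)).
      a (snd e) z * sin (tdiff T y (snd e) z) - a (fst e) z * sin (tdiff T y (fst e) z))"

definition mmul :: "'b set \<Rightarrow> ('a \<Rightarrow> 'b \<Rightarrow> real) \<Rightarrow> ('b \<Rightarrow> 'c \<Rightarrow> real) \<Rightarrow> 'a \<Rightarrow> 'c \<Rightarrow> real" where
  "mmul S A B = (\<lambda>i k. \<Sum>j\<in>S. A i j * B j k)"

definition mtr :: "('a \<Rightarrow> 'b \<Rightarrow> real) \<Rightarrow> 'b \<Rightarrow> 'a \<Rightarrow> real" where
  "mtr M = (\<lambda>i j. M j i)"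

definition mdiag :: "('a \<Rightarrow> real) \<Rightarrow> 'a \<Rightarrow> 'a \<Rightarrow> real" where
  "mdiag d = (\<lambda>i j. if i = j then d i else 0)"

definition pinv :: "'r set \<Rightarrow> 'c set \<Rightarrow> ('r \<Rightarrow> 'c \<Rightarrow> real) \<Rightarrow> 'c \<Rightarrow> 'r \<Rightarrow> real" where
  "pinv R C M = (THE X.
     (\<forall>i j. (i \<notin> C \<or> j \<notin> R) \<longrightarrow> X i j = 0) \<and>
     (\<forall>i\<in>R. \<forall>j\<in>C. mmul R (mmul C M X) M i j = M i j) \<and>
     (\<forall>i\<in>C. \<forall>j\<in>R. mmul C (mmul R X M) X i j = X i j) \<and>
     (\<forall>i\<in>R. \<forall>j\<in>R. mmul C M X i j = mmul C M X j i) \<and>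
     (\<forall>i\<in>C. \<forall>j\<in>C. mmul R X M i j = mmul R X M j i))"

definition incid :: "nat set \<Rightarrow> (nat \<times> nat) set \<Rightarrow> nat \<Rightarrow> nat \<times> nat \<Rightarrow> real" where
  "incid V E = (\<lambda>v e. if v \<in> V \<and> e \<in> E then
       (if v = fst e then -1 else if v = snd e then 1 else 0) else 0)"

definition T_intra :: "nat \<Rightarrow> (nat \<Rightarrow> nat) \<Rightarrow> (nat \<Rightarrow> nat \<Rightarrow> real) \<Rightarrow> (nat \<Rightarrow> (nat \<times> nat) set)
    \<Rightarrow> nat \<Rightarrow> nat \<times> nat \<Rightarrow> nat \<times> nat \<Rightarrow> real" where
  "T_intra n c a Espan k =
     (let Pk = cluster n c k; Ek = graph_edges a Pk in
      mmul Pk (mtr (incid Pk Ek)) (pinv (Espan k) Pk (mtr (incid Pk (Espan k)))))"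

definition J_blk :: "nat \<Rightarrow> (nat \<Rightarrow> nat) \<Rightarrow> (nat \<Rightarrow> nat \<Rightarrow> real) \<Rightarrow> (nat \<Rightarrow> (nat \<times> nat) set)
    \<Rightarrow> nat \<Rightarrow> nat \<times> nat \<Rightarrow> nat \<times> nat \<Rightarrow> real" where
  "J_blk n c a Espan k =
     (let Pk = cluster n c k; Ek = graph_edges a Pk in
      (\<lambda>e e'. - mmul Ek (mmul Ek (mmul Pk (mtr (incid Pk (Espan k))) (incid Pk Ek))
                              (mdiag (\<lambda>f. a (fst f) (snd f))))
                  (T_intra n c a Espan k) e e'))"

definition is_hurwitz :: "'a set \<Rightarrow> ('a \<Rightarrow> 'a \<Rightarrow> real) \<Rightarrow> bool" where
  "is_hurwitz S J \<longleftrightarrow> (\<forall>(\<mu>::complex) v. (\<exists>e\<in>S. v e \<noteq> 0) \<and>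
      (\<forall>e\<in>S. (\<Sum>e'\<in>S. complex_of_real (J e e') * v e') = \<mu> * v e) \<longrightarrow> Re \<mu> < 0)"

definition setnorm :: "'a set \<Rightarrow> ('a \<Rightarrow> real) \<Rightarrow> real" where
  "setnorm S x = sqrt (\<Sum>e\<in>S. (x e)\<^sup>2)"

definition exp_stable_origin :: "'a set \<Rightarrow> (('a \<Rightarrow> real) \<Rightarrow> 'a \<Rightarrow> real) \<Rightarrow> bool" where
  "exp_stable_origin S f \<longleftrightarrow> (\<forall>e\<in>S. f (\<lambda>_. 0) e = 0) \<and>
     (\<exists>\<delta>>0. \<exists>M lam. lam > 0 \<and>
        (\<forall>x :: real \<Rightarrow> 'a \<Rightarrow> real.
           (\<forall>e\<in>S. \<forall>t\<ge>0. ((\<lambda>s. x s e) has_real_derivative f (x t) e) (at t within {0..}))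
           \<and> setnorm S (x 0) < \<delta>
           \<longrightarrow> (\<forall>t\<ge>0. setnorm S (x t) \<le> M * exp (- lam * t) * setnorm S (x 0))))"

definition gamma_tilde :: "nat \<Rightarrow> nat \<Rightarrow> (nat \<Rightarrow> nat) \<Rightarrow> (nat \<Rightarrow> nat \<Rightarrow> real) \<Rightarrow> nat \<Rightarrow> nat \<Rightarrow> nat \<Rightarrow> real" where
  "gamma_tilde n m c a k l i =
     (if l \<noteq> k then (\<Sum>j\<in>cluster n c l. a i j)
      else (\<Sum>l'\<in>{..<m} - {k}. \<Sum>j\<in>cluster n c l'. a i j))"

definition gamma :: "nat \<Rightarrow> nat \<Rightarrow> (nat \<Rightarrow> nat) \<Rightarrow> (nat \<Rightarrow> nat \<Rightarrow> real) \<Rightarrow> nat \<Rightarrow> nat \<Rightarrow> real" where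
  "gamma n m c a k l =
     2 * real (Max ((\<lambda>r. card (cluster n c r) - 1) ` {..<m}))
       * gamma_tilde n m c a k l (SOME i. i \<in> cluster n c k)"

end

theory Submission
  imports Defs
begin

text \<open>Because paths in a tree are unique, every phase difference diff(p(u,w)) is a linear form in the
  tree coordinates, and on a tree edge it is just that coordinate.

  (i) Linearising sin at 0 gives the block Jacobian. The pseudoinverse of the transposed incidence
  matrix of T_k is, column by column, the mean-free node potential of a tree edge, which turns
  J_k = -B_span,k^T B_k diag(a) T_intra,k into the derivative of F. An eigenvector of J_k is the
  vector of edge differences of a node potential \<psi> on P_k for which L\<psi> - \<mu>\<psi> is constant, L the
  weighted Laplacian of G_k; pairing with the centred potential gives
  Re \<mu> |\<phi>|^2 = -1/2 \<Sum> a_uz |\<phi>_z - \<phi>_u|^2 < 0. For exponential stability the Lyapunov function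
  V = \<Sum>_k \<Sum>_{u,w \<in> P_k} (\<theta>_w - \<theta>_u)^2 is comparable to |x_intra|^2 and, by x sin x \<ge> x^2/2 for
  |x| \<le> 1, decays at least like -a_min |x_intra|^2 while V \<le> 1.

  (ii) By (A3) the two endpoints of an intra-cluster edge send the same total weight into any other
  cluster, so each cross-cluster sum may be recentred at one common phase difference. Since sin is
  1-Lipschitz and a phase difference inside P_l is bounded by the l1 norm of the tree coordinates
  of T_l, which is at most sqrt(n_intra,l) times their Euclidean norm, the stated gains follow.\<close>

section \<open>Walks and path differences\<close>

definition oriented_step :: "(nat \<times> nat \<Rightarrow> real) \<Rightarrow> nat \<Rightarrow> nat \<Rightarrow> real" where
  "oriented_step x u v = (if u < v then x (u,v) else - x (v,u))"

fun is_walk :: "(nat \<times> nat) set \<Rightarrow> nat list \<Rightarrow> bool" where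
  "is_walk T [] = True"
| "is_walk T [u] = True"
| "is_walk T (u#v#q) = (((u,v)\<in>T \<or> (v,u)\<in>T) \<and> is_walk T (v#q))"

lemma path_diff_nil[simp]: "path_diff x [] = 0"
  by (simp add: path_diff_def)

lemma path_diff_single[simp]: "path_diff x [u] = 0"
  by (simp add: path_diff_def)

lemma path_diff_cons2[simp]: "path_diff x (u#v#q) = oriented_step x u v + path_diff x (v#q)"
proof -
  have "path_diff x (u#v#q) = (\<Sum>r<Suc (length q).
      if (u#v#q)!r < (u#v#q)!Suc r then x ((u#v#q)!r, (u#v#q)!Suc r) else - x ((u#v#q)!Suc r, (u#v#q)!r))"
    by (simp add: path_diff_def)
  also have "\<dots> = oriented_step x u v + (\<Sum>r<length q.
      if (v#q)!r < (v#q)!Suc r then x ((v#q)!r, (v#q)!Suc r) else - x ((v#q)!Suc r, (v#q)!r))"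
    by (subst sum.lessThan_Suc_shift) (simp only: oriented_step_def nth_Cons_Suc nth_Cons_0)
  also have "\<dots> = oriented_step x u v + path_diff x (v#q)"
    by (simp add: path_diff_def)
  finally show ?thesis .
qed

lemma is_walk_nth: "is_walk T p \<longleftrightarrow> (\<forall>r. Suc r < length p \<longrightarrow> (p!r, p!Suc r) \<in> T \<or> (p!Suc r, p!r) \<in> T)"
proof (induction T p rule: is_walk.induct)
  case (3 T u v q)
  show ?case
  proof
    assume "is_walk T (u#v#q)"
    then show "\<forall>r. Suc r < length (u#v#q) \<longrightarrow> ((u#v#q)!r, (u#v#q)!Suc r) \<in> T \<or> ((u#v#q)!Suc r, (u#v#q)!r) \<in> T"
      using 3 by (auto simp: nth_Cons split: nat.splits)
  next
    assume H: "\<forall>r. Suc r < length (u#v#q) \<longrightarrow> ((u#v#q)!r, (u#v#q)!Suc r) \<in> T \<or> ((u#v#q)!Suc r, (u#v#q)!r) \<in> T"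
    have "(u,v)\<in>T \<or> (v,u)\<in>T" using H[rule_format, of 0] by simp
    moreover have "\<forall>r. Suc r < length (v#q) \<longrightarrow> ((v#q)!r, (v#q)!Suc r) \<in> T \<or> ((v#q)!Suc r, (v#q)!r) \<in> T"
      using H[rule_format, of "Suc _"] by simp
    ultimately show "is_walk T (u#v#q)" using 3 by simp
  qed
qed auto

lemma is_tree_path_iff_walk: "is_tree_path T i j p \<longleftrightarrow> p \<noteq> [] \<and> hd p = i \<and> last p = j \<and> distinct p \<and> is_walk T p"
  unfolding is_tree_path_def is_walk_nth by blast

lemma is_walk_append: "is_walk T (p @ q) \<longleftrightarrow> is_walk T p \<and> is_walk T q \<and>
   (p \<noteq> [] \<and> q \<noteq> [] \<longrightarrow> ((last p, hd q) \<in> T \<or> (hd q, last p) \<in> T))"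
proof (induction T p rule: is_walk.induct)
  case (2 T u)
  then show ?case by (cases q) auto
qed auto

lemma is_walk_mono: "is_walk S p \<Longrightarrow> S \<subseteq> T \<Longrightarrow> is_walk T p"
  by (induction S p rule: is_walk.induct) auto

lemma is_walk_remove_edge: "is_walk S p \<Longrightarrow> u \<notin> set p \<Longrightarrow> (a = u \<or> b = u) \<Longrightarrow> is_walk (S - {(a,b)}) p"
  by (induction S p rule: is_walk.induct) auto

definition undirected :: "(nat \<times> nat) set \<Rightarrow> (nat \<times> nat) set" where
  "undirected S = S \<union> S\<inverse>"

lemma undirected_rtrancl_sym: "(x,y) \<in> (undirected S)\<^sup>* \<Longrightarrow> (y,x) \<in> (undirected S)\<^sup>*"
proof -
  assume "(x,y) \<in> (undirected S)\<^sup>*"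
  hence "(y,x) \<in> ((undirected S)\<inverse>)\<^sup>*" by (simp add: rtrancl_converse)
  moreover have "(undirected S)\<inverse> = undirected S" by (auto simp: undirected_def)
  ultimately show ?thesis by simp
qed

lemma is_walk_rtrancl: "is_walk S p \<Longrightarrow> p \<noteq> [] \<Longrightarrow> (hd p, last p) \<in> (undirected S)\<^sup>*"
proof (induction S p rule: is_walk.induct)
  case (3 T u v q)
  then have "(v, last (v#q)) \<in> (undirected T)\<^sup>*" by simp
  moreover have "(u,v) \<in> undirected T" using 3 by (auto simp: undirected_def)
  ultimately show ?case by (simp add: converse_rtrancl_into_rtrancl)
qed auto

definition is_potential :: "(nat \<times> nat) set \<Rightarrow> (nat \<times> nat \<Rightarrow> real) \<Rightarrow> (nat \<Rightarrow> real) \<Rightarrow> bool" where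
  "is_potential S x th \<longleftrightarrow> (\<forall>(i,j)\<in>S. i < j \<and> x (i,j) = th j - th i)"

lemma path_diff_telescope:
  "is_walk S p \<Longrightarrow> is_potential S x th \<Longrightarrow> p \<noteq> [] \<Longrightarrow> path_diff x p = th (last p) - th (hd p)"
proof (induction S p rule: is_walk.induct)
  case (3 T u v q)
  have "oriented_step x u v = th v - th u"
  proof (cases "(u,v) \<in> T")
    case True then show ?thesis using 3(3) by (force simp: is_potential_def oriented_step_def)
  next
    case False
    then have "(v,u) \<in> T" using 3(2) by simp
    then show ?thesis using 3(3) by (force simp: is_potential_def oriented_step_def)
  qed
  then show ?case using 3 by simp
qed auto

lemma path_diff_snoc: "p \<noteq> [] \<Longrightarrow> path_diff x (p @ [w]) = path_diff x p + oriented_step x (last p) w"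
proof (induction p rule: induct_list012)
  case (3 u v q)
  then show ?case by simp
qed auto

lemma path_diff_cong: "is_walk S p \<Longrightarrow> (\<forall>e\<in>S. x e = y e) \<Longrightarrow> (\<forall>(i,j)\<in>S. i < j) \<Longrightarrow> path_diff x p = path_diff y p"
  by (induction S p rule: is_walk.induct) (auto simp: oriented_step_def)

lemma path_diff_linear: "path_diff (\<lambda>f. \<Sum>e\<in>A. g e * h e f) p = (\<Sum>e\<in>A. g e * path_diff (h e) p)"
  by (induction p rule: induct_list012)
    (auto simp: oriented_step_def sum.distrib sum_negf algebra_simps sum_distrib_left)

lemma abs_path_diff_le:
  "is_walk S p \<Longrightarrow> distinct p \<Longrightarrow> finite S \<Longrightarrow> (\<forall>(i,j)\<in>S. i < j) \<Longrightarrow>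
   \<bar>path_diff y p\<bar> \<le> (\<Sum>e\<in>S. \<bar>y e\<bar>)"
proof (induction p arbitrary: S rule: induct_list012)
  case 1 then show ?case by (simp add: sum_nonneg)
next
  case (2 u) then show ?case by (simp add: sum_nonneg)
next
  case (3 u v q)
  define e where "e = (min u v, max u v)"
  have adj: "(u,v) \<in> S \<or> (v,u) \<in> S" using 3 by simp
  have eS: "e \<in> S" using adj "3.prems"(4) unfolding e_def by (auto simp: min_def max_def)
  have st: "\<bar>oriented_step y u v\<bar> = \<bar>y e\<bar>" unfolding e_def oriented_step_def by (auto simp: min_def max_def)
  have wq: "is_walk (S - {e}) (v#q)"
    using is_walk_remove_edge[of S "v#q" u "min u v" "max u v"] "3.prems"(1,2)
    by (simp add: e_def min_def max_def)
  have "\<bar>path_diff y (v#q)\<bar> \<le> (\<Sum>e'\<in>S - {e}. \<bar>y e'\<bar>)"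
    by (rule "3.IH"(2)[OF wq]) (use "3.prems" in auto)
  then have "\<bar>path_diff y (u#v#q)\<bar> \<le> \<bar>y e\<bar> + (\<Sum>e'\<in>S - {e}. \<bar>y e'\<bar>)"
    using st by (simp add: abs_triangle_ineq order_trans[OF abs_triangle_ineq] add_mono)
  also have "\<dots> = (\<Sum>e'\<in>S. \<bar>y e'\<bar>)" using eS "3.prems"(3) by (simp add: sum.remove)
  finally show ?case .
qed

section \<open>Oriented spanning trees\<close>

lemma connected_parent_map:
  assumes conn: "\<forall>v\<in>V. (v,r) \<in> (undirected E)\<^sup>*"
  obtains p :: "nat \<Rightarrow> nat" and d :: "nat \<Rightarrow> nat"
  where "\<And>v. v \<in> V \<Longrightarrow> v \<noteq> r \<Longrightarrow> (v, p v) \<in> undirected E \<and> d (p v) < d v"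
proof
  define R where "R = undirected E"
  define d where "d v = (LEAST k. (v,r) \<in> R^^k)" for v
  define p where "p v = (SOME y. (v,y) \<in> R \<and> (y,r) \<in> R^^(d v - 1))" for v
  fix v assume v: "v \<in> V" "v \<noteq> r"
  have "\<exists>k. (v,r) \<in> R^^k" using conn v rtrancl_power unfolding R_def by blast
  then have path: "(v,r) \<in> R^^(d v)" unfolding d_def by (rule LeastI_ex)
  moreover have "d v \<noteq> 0" using path v(2) by (cases "d v") auto
  ultimately have "(v,r) \<in> R^^Suc (d v - 1)" by simp
  then have "\<exists>y. (v,y) \<in> R \<and> (y,r) \<in> R^^(d v - 1)" by (rule relpow_Suc_D2)
  then have "(v, p v) \<in> R \<and> (p v, r) \<in> R^^(d v - 1)"
    unfolding p_def by (rule someI_ex)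
  then have step: "(v, p v) \<in> R" and rest: "(p v, r) \<in> R^^(d v - 1)" by auto
  have "d (p v) \<le> d v - 1" unfolding d_def[of "p v"] using rest by (rule Least_le)
  then show "(v, p v) \<in> undirected E \<and> d (p v) < d v"
    using step \<open>d v \<noteq> 0\<close> by (simp add: R_def)
qed

lemma card_edges_ge_if_connected:
  assumes fin: "finite V" and EV: "E \<subseteq> V \<times> V" and rV: "r \<in> V"
    and conn: "\<forall>v\<in>V. (v,r) \<in> (undirected E)\<^sup>*"
  shows "card V - 1 \<le> card E"
proof -
  obtain p d :: "nat \<Rightarrow> nat" where pd: "\<And>v. v \<in> V \<Longrightarrow> v \<noteq> r \<Longrightarrow> (v, p v) \<in> undirected E \<and> d (p v) < d v"
    using connected_parent_map[OF conn] by blast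
  define f where "f v = (if (v, p v) \<in> E then (v, p v) else (p v, v))" for v
  have "f ` (V - {r}) \<subseteq> E" using pd by (auto simp: f_def undirected_def)
  moreover have "inj_on f (V - {r})"
  proof (rule inj_onI, rule ccontr)
    fix v w assume v: "v \<in> V - {r}" and w: "w \<in> V - {r}" and "f v = f w" "v \<noteq> w"
    then have vw: "p w = v" "p v = w" by (auto simp: f_def split: if_splits)
    have "d (p w) < d w" "d (p v) < d v" using pd v w by auto
    then show False unfolding vw by linarith
  qed
  moreover have "finite E" using fin EV by (meson finite_SigmaI finite_subset)
  ultimately have "card (V - {r}) \<le> card E" by (metis card_inj_on_le)
  then show ?thesis using rV fin by simp
qed

lemma rtrancl_undirected_remove_bypassed_edge:
  assumes bypass: "(a,b) \<in> (undirected (S - {(a,b)}))\<^sup>*" and xy: "(x,y) \<in> (undirected S)\<^sup>*"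
  shows "(x,y) \<in> (undirected (S - {(a,b)}))\<^sup>*"
  using xy
proof (induction rule: rtrancl_induct)
  case (step y z)
  show ?case
  proof (cases "(y,z) \<in> undirected (S - {(a,b)})")
    case True then show ?thesis using step by (meson rtrancl.rtrancl_into_rtrancl)
  next
    case False
    then have "(y,z) = (a,b) \<or> (y,z) = (b,a)" using step(2) unfolding undirected_def by auto
    then have "(y,z) \<in> (undirected (S - {(a,b)}))\<^sup>*" using bypass undirected_rtrancl_sym by auto
    then show ?thesis using step(3) by simp
  qed
qed simp

locale oriented_tree =
  fixes V :: "nat set" and T :: "(nat \<times> nat) set"
  assumes finite_V: "finite V"
    and orient: "\<forall>(i,j)\<in>T. i \<in> V \<and> j \<in> V \<and> i < j"
    and conn_T: "ug_connected V T"
    and card_T: "card T = card V - 1"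
begin

lemma T_subset: "T \<subseteq> V \<times> V" using orient by auto

lemma undirected_restrict: "(T \<union> T\<inverse>) \<inter> (V \<times> V) = undirected T"
  using T_subset unfolding undirected_def by auto

lemma undirected_connected: "u \<in> V \<Longrightarrow> v \<in> V \<Longrightarrow> (u,v) \<in> (undirected T)\<^sup>*"
  using conn_T undirected_restrict unfolding ug_connected_def by auto

lemma path_exists_rtrancl: "(u,v) \<in> (undirected T)\<^sup>* \<Longrightarrow> \<exists>p. is_tree_path T u v p"
proof (induction rule: rtrancl_induct)
  case base
  then show ?case by (rule exI[of _ "[u]"]) (simp add: is_tree_path_iff_walk)
next
  case (step y z)
  then obtain p where p: "is_tree_path T u y p" by blast
  show ?case
  proof (cases "z \<in> set p")
    case True
    then obtain p1 p2 where pp: "p = p1 @ z # p2" by (meson split_list)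
    have "is_walk T ((p1 @ [z]) @ p2)" using p pp by (simp add: is_tree_path_iff_walk)
    then have "is_walk T (p1 @ [z])" using is_walk_append[of T "p1 @ [z]" p2] by blast
    then have "is_tree_path T u z (p1 @ [z])"
      using p pp unfolding is_tree_path_iff_walk by (cases p1) auto
    then show ?thesis by blast
  next
    case False
    have "is_tree_path T u z (p @ [z])"
      using p False step(2) unfolding is_tree_path_iff_walk undirected_def by (auto simp: is_walk_append)
    then show ?thesis by blast
  qed
qed

lemma path_exists: "u \<in> V \<Longrightarrow> v \<in> V \<Longrightarrow> \<exists>p. is_tree_path T u v p"
  using path_exists_rtrancl undirected_connected by blast

lemma diverging_paths_bypass:
  assumes p: "is_tree_path T u v (u # w # p)" and q: "is_tree_path T u v (u # w' # q)" and "w \<noteq> w'"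
  shows "\<exists>a b. (a,b) \<in> T \<and> (a,b) \<in> (undirected (T - {(a,b)}))\<^sup>*"
proof -
  have adj: "(u,w) \<in> T \<or> (w,u) \<in> T" using p by (simp add: is_tree_path_iff_walk)
  have uw': "u \<noteq> w'" using q by (simp add: is_tree_path_iff_walk)
  define a where "a = min u w"
  define b where "b = max u w"
  have abT: "(a,b) \<in> T" using adj orient unfolding a_def b_def by auto
  have ab: "(a = u \<and> b = w) \<or> (a = w \<and> b = u)" unfolding a_def b_def by auto
  have wq: "is_walk T (w'#q)" and uw'T: "(u,w') \<in> T \<or> (w',u) \<in> T"
    using q by (auto simp: is_tree_path_iff_walk)
  have "u \<notin> set (w'#q)" using q by (simp add: is_tree_path_iff_walk)
  then have "is_walk (T - {(a,b)}) (w'#q)" using is_walk_remove_edge[OF wq] ab by blast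
  moreover have "(u,w') \<in> T - {(a,b)} \<or> (w',u) \<in> T - {(a,b)}"
    using uw'T ab \<open>w \<noteq> w'\<close> uw' by auto
  ultimately have "is_walk (T - {(a,b)}) (u # w' # q)" by simp
  then have r1: "(u, v) \<in> (undirected (T - {(a,b)}))\<^sup>*"
    using is_walk_rtrancl[of "T - {(a,b)}" "u # w' # q"] q by (simp add: is_tree_path_iff_walk)
  have wp: "is_walk T (w # p)" using p by (simp add: is_tree_path_iff_walk)
  have "u \<notin> set (w # p)" using p by (simp add: is_tree_path_iff_walk)
  then have "is_walk (T - {(a,b)}) (w # p)" using is_walk_remove_edge[OF wp] ab by blast
  then have "(w, v) \<in> (undirected (T - {(a,b)}))\<^sup>*"
    using is_walk_rtrancl[of "T - {(a,b)}" "w # p"] p by (simp add: is_tree_path_iff_walk)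
  then have "(v, w) \<in> (undirected (T - {(a,b)}))\<^sup>*" by (rule undirected_rtrancl_sym)
  with r1 have "(u, w) \<in> (undirected (T - {(a,b)}))\<^sup>*" by simp
  then have "(a, b) \<in> (undirected (T - {(a,b)}))\<^sup>*" using ab undirected_rtrancl_sym by blast
  then show ?thesis using abT by blast
qed

lemma distinct_paths_bypass:
  "is_tree_path T u v p \<Longrightarrow> is_tree_path T u v q \<Longrightarrow> p \<noteq> q \<Longrightarrow>
     \<exists>a b. (a,b) \<in> T \<and> (a,b) \<in> (undirected (T - {(a,b)}))\<^sup>*"
proof (induction p arbitrary: q u)
  case Nil then show ?case by (simp add: is_tree_path_iff_walk)
next
  case (Cons u' p')
  have uu: "u' = u" using Cons.prems by (simp add: is_tree_path_iff_walk)
  obtain q' where qq: "q = u # q'" using Cons.prems(2) unfolding is_tree_path_iff_walk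
    by (cases q) auto
  have p'ne: "p' \<noteq> []"
  proof
    assume "p' = []"
    then have "u = v" using Cons.prems uu by (simp add: is_tree_path_iff_walk)
    then have "q' = []" using Cons.prems(2) qq unfolding is_tree_path_iff_walk
      by (cases q' rule: rev_cases) auto
    then show False using Cons.prems(3) qq uu \<open>p' = []\<close> by simp
  qed
  have q'ne: "q' \<noteq> []"
  proof
    assume "q' = []"
    then have "u = v" using Cons.prems qq by (simp add: is_tree_path_iff_walk)
    then have "p' = []" using Cons.prems(1) uu unfolding is_tree_path_iff_walk
      by (cases p' rule: rev_cases) auto
    then show False using p'ne by simp
  qed
  obtain w p'' where pw: "p' = w # p''" using p'ne by (cases p') auto
  obtain w' q'' where qw: "q' = w' # q''" using q'ne by (cases q') auto
  show ?case
  proof (cases "w = w'")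
    case True
    have "is_tree_path T w v p'" "is_tree_path T w v q'" "p' \<noteq> q'"
      using Cons.prems uu qq pw qw True unfolding is_tree_path_iff_walk by auto
    then show ?thesis using Cons.IH by blast
  next
    case False
    then show ?thesis
      using diverging_paths_bypass[of u v w p'' w' q''] Cons.prems(1,2) uu qq pw qw by simp
  qed
qed

text \<open>Two distinct paths expose an edge that can be bypassed; deleting it leaves a connected graph
  with fewer than |V| - 1 edges.\<close>

lemma path_unique:
  assumes "is_tree_path T u v p" "is_tree_path T u v q" shows "p = q"
proof (rule ccontr)
  assume "p \<noteq> q"
  then obtain a b where abT: "(a,b) \<in> T" and bypass: "(a,b) \<in> (undirected (T - {(a,b)}))\<^sup>*"
    using distinct_paths_bypass assms by blast
  have aV: "a \<in> V" using abT orient by auto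
  have "card V - 1 \<le> card (T - {(a,b)})"
    by (rule card_edges_ge_if_connected[OF finite_V _ aV])
      (use T_subset undirected_connected aV rtrancl_undirected_remove_bypassed_edge[OF bypass] in auto)
  moreover have "finite T" using T_subset finite_V by (meson finite_SigmaI finite_subset)
  then have "card (T - {(a,b)}) = card T - 1" using abT by simp
  moreover have "card T \<ge> 1" using abT \<open>finite T\<close> by (auto simp: Suc_le_eq card_gt_0_iff)
  ultimately show False using card_T by linarith
qed

lemma tdiff_eq_path_diff: "is_tree_path T u v p \<Longrightarrow> tdiff T x u v = path_diff x p"
  unfolding tdiff_def using path_unique by (metis the_equality)

lemma is_potential_tdiff_root:
  assumes rV: "r \<in> V" shows "is_potential T x (\<lambda>v. tdiff T x r v)"
  unfolding is_potential_def
proof (intro ballI, clarify)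
  fix i j assume ij: "(i,j) \<in> T"
  have iV: "i \<in> V" and jV: "j \<in> V" and lt: "i < j" using ij orient by auto
  obtain p where p: "is_tree_path T r i p" using path_exists rV iV by blast
  have ti: "tdiff T x r i = path_diff x p" using tdiff_eq_path_diff[OF p] .
  show "i < j \<and> x (i, j) = tdiff T x r j - tdiff T x r i"
  proof (cases "j \<in> set p")
    case False
    have pj: "is_tree_path T r j (p @ [j])"
      using p False ij unfolding is_tree_path_iff_walk by (auto simp: is_walk_append)
    have "tdiff T x r j = path_diff x p + oriented_step x i j"
      using tdiff_eq_path_diff[OF pj] path_diff_snoc[of p x j] p by (simp add: is_tree_path_iff_walk)
    then show ?thesis using ti lt by (simp add: oriented_step_def)
  next
    case True
    then obtain p1 p2 where pp: "p = p1 @ j # p2" by (meson split_list)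
    have wp: "is_walk T p" using p by (simp add: is_tree_path_iff_walk)
    have w1: "is_walk T ((p1 @ [j]) @ p2)" using wp pp by simp
    then have wa: "is_walk T (p1 @ [j])" using is_walk_append[of T "p1 @ [j]" p2] by blast
    have w2: "is_walk T (p1 @ (j # p2))" using wp pp by simp
    then have wb: "is_walk T (j # p2)" using is_walk_append[of T p1 "j # p2"] by blast
    have pj: "is_tree_path T r j (p1 @ [j])"
      using p pp wa unfolding is_tree_path_iff_walk by (cases p1) auto
    have p2ne: "p2 \<noteq> []"
    proof
      assume "p2 = []"
      then have "last p = j" using pp by simp
      then show False using p lt by (simp add: is_tree_path_iff_walk)
    qed
    have "is_tree_path T j i (j # p2)"
      using p pp wb p2ne unfolding is_tree_path_iff_walk by auto
    moreover have "is_tree_path T j i [j, i]"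
      using ij lt unfolding is_tree_path_iff_walk by auto
    ultimately have "j # p2 = [j, i]" by (rule path_unique)
    then have pp2: "p = (p1 @ [j]) @ [i]" using pp by simp
    have "path_diff x p = path_diff x (p1 @ [j]) + oriented_step x j i"
      unfolding pp2 by (subst path_diff_snoc) auto
    then have "tdiff T x r i = tdiff T x r j - x (i,j)"
      using ti tdiff_eq_path_diff[OF pj] lt by (simp add: oriented_step_def)
    then show ?thesis using lt by simp
  qed
qed

lemma tdiff_root:
  assumes "r \<in> V" "u \<in> V" "w \<in> V"
  shows "tdiff T x u w = tdiff T x r w - tdiff T x r u"
proof -
  obtain p where p: "is_tree_path T u w p" using path_exists assms by blast
  have "tdiff T x u w = path_diff x p" by (rule tdiff_eq_path_diff[OF p])
  also have "\<dots> = tdiff T x r (last p) - tdiff T x r (hd p)"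
    by (rule path_diff_telescope[OF _ is_potential_tdiff_root[OF assms(1)]])
      (use p in \<open>auto simp: is_tree_path_iff_walk\<close>)
  finally show ?thesis using p by (simp add: is_tree_path_iff_walk)
qed

lemma tdiff_self: "u \<in> V \<Longrightarrow> tdiff T x u u = 0"
  using tdiff_root[of u u u x] by simp

lemma tdiff_walk:
  assumes "is_walk T p" "p \<noteq> []" "hd p \<in> V"
  shows "path_diff x p = tdiff T x (hd p) (last p)"
proof -
  have "path_diff x p = tdiff T x (hd p) (last p) - tdiff T x (hd p) (hd p)"
    by (rule path_diff_telescope[OF assms(1) is_potential_tdiff_root[OF assms(3)] assms(2)])
  then show ?thesis using tdiff_self[OF assms(3)] by simp
qed

lemma tdiff_edge: "(i,j) \<in> T \<Longrightarrow> tdiff T x i j = x (i,j)"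
  using tdiff_walk[of "[i,j]" x] orient by (auto simp: oriented_step_def)

end

section \<open>Index-set matrices and the Moore--Penrose inverse\<close>

lemma mmul_assoc: "finite A \<Longrightarrow> finite B \<Longrightarrow>
  mmul B (mmul A P Q) R i k = mmul A P (mmul B Q R) i k"
  unfolding mmul_def by (simp add: sum_distrib_left sum_distrib_right mult.assoc sum.swap[of _ A B])

lemma mmul_cong: "(\<forall>j\<in>A. P i j = P' i j) \<Longrightarrow> (\<forall>j\<in>A. Q j k = Q' j k) \<Longrightarrow> mmul A P Q i k = mmul A P' Q' i k"
  unfolding mmul_def by (auto intro!: sum.cong)

lemma mmul_right_unit: "finite A \<Longrightarrow> k \<in> A \<Longrightarrow> (\<forall>j\<in>A. Q j k = (if j = k then 1 else 0)) \<Longrightarrow> mmul A P Q i k = P i k"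
proof -
  assume H: "finite A" "k \<in> A" "\<forall>j\<in>A. Q j k = (if j = k then 1 else 0)"
  have "mmul A P Q i k = (\<Sum>x\<in>A. if x = k then P i x else 0)"
    unfolding mmul_def using H by (intro sum.cong) auto
  then show ?thesis using H by (simp add: sum.delta')
qed

lemma mmul_left_unit: "finite A \<Longrightarrow> i \<in> A \<Longrightarrow> (\<forall>j\<in>A. P i j = (if i = j then 1 else 0)) \<Longrightarrow> mmul A P Q i k = Q i k"
proof -
  assume H: "finite A" "i \<in> A" "\<forall>j\<in>A. P i j = (if i = j then 1 else 0)"
  have "mmul A P Q i k = (\<Sum>x\<in>A. if i = x then Q x k else 0)"
    unfolding mmul_def using H by (intro sum.cong) auto
  then show ?thesis using H by (simp add: sum.delta)
qed

definition is_penrose_inverse :: "'r set \<Rightarrow> 'c set \<Rightarrow> ('r \<Rightarrow> 'c \<Rightarrow> real) \<Rightarrow> ('c \<Rightarrow> 'r \<Rightarrow> real) \<Rightarrow> bool" where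
  "is_penrose_inverse R C M X \<longleftrightarrow>
     (\<forall>i j. (i \<notin> C \<or> j \<notin> R) \<longrightarrow> X i j = 0) \<and>
     (\<forall>i\<in>R. \<forall>j\<in>C. mmul R (mmul C M X) M i j = M i j) \<and>
     (\<forall>i\<in>C. \<forall>j\<in>R. mmul C (mmul R X M) X i j = X i j) \<and>
     (\<forall>i\<in>R. \<forall>j\<in>R. mmul C M X i j = mmul C M X j i) \<and>
     (\<forall>i\<in>C. \<forall>j\<in>C. mmul R X M i j = mmul R X M j i)"

lemma pinv_eq_THE_penrose: "pinv R C M = (THE X. is_penrose_inverse R C M X)"
  unfolding pinv_def is_penrose_inverse_def by simp

lemma symmetric_idempotents_eq:
  assumes fin: "finite C" and v: "v \<in> C" and w: "w \<in> C"
    and P_sym: "\<forall>i\<in>C. \<forall>j\<in>C. P i j = P j i" and Q_sym: "\<forall>i\<in>C. \<forall>j\<in>C. Q i j = Q j i"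
    and PQ: "\<forall>i\<in>C. \<forall>j\<in>C. mmul C P Q i j = P i j" and QP: "\<forall>i\<in>C. \<forall>j\<in>C. mmul C Q P i j = Q i j"
  shows "P v w = Q v w"
proof -
  have "P v w = mmul C P Q w v" using PQ P_sym v w by simp
  also have "\<dots> = mmul C Q P v w"
    unfolding mmul_def using P_sym Q_sym v w by (intro sum.cong) auto
  also have "\<dots> = Q v w" using QP v w by simp
  finally show ?thesis .
qed

lemma mmul_right_inverse_absorb:
  assumes "finite R" "finite C" and j: "j \<in> R"
    and MX: "\<forall>i\<in>R. \<forall>j\<in>R. mmul C M X i j = (if i = j then 1 else 0)"
  shows "mmul C M (mmul R X M) j w = M j w"
proof -
  have "mmul C M (mmul R X M) j w = mmul R (mmul C M X) M j w"
    by (rule mmul_assoc[symmetric]) (use assms in auto)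
  also have "\<dots> = M j w" by (rule mmul_left_unit) (use assms in auto)
  finally show ?thesis .
qed

lemma penrose_inverse_unique:
  assumes finR: "finite R" and finC: "finite C"
    and X: "is_penrose_inverse R C M X" and MX: "\<forall>i\<in>R. \<forall>j\<in>R. mmul C M X i j = (if i = j then 1 else 0)"
    and Y: "is_penrose_inverse R C M Y"
  shows "Y = X"
proof -
  have MY: "\<forall>i\<in>R. \<forall>j\<in>R. mmul C M Y i j = (if i = j then 1 else 0)"
  proof (intro ballI)
    fix i j assume ij: "i \<in> R" "j \<in> R"
    have "mmul C M Y i j = mmul R (mmul C M Y) (mmul C M X) i j"
      by (rule mmul_right_unit[symmetric]) (use finR ij MX in auto)
    also have "\<dots> = mmul C (mmul R (mmul C M Y) M) X i j"
      by (rule mmul_assoc[symmetric, OF finR finC])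
    also have "\<dots> = mmul C M X i j"
      by (rule mmul_cong) (use Y ij in \<open>auto simp: is_penrose_inverse_def\<close>)
    finally show "mmul C M Y i j = (if i = j then 1 else 0)" using MX ij by simp
  qed
  have YM_XM: "mmul R Y M v w = mmul R X M v w" if "v \<in> C" "w \<in> C" for v w
  proof (rule symmetric_idempotents_eq[OF finC that])
    show "\<forall>i\<in>C. \<forall>j\<in>C. mmul R Y M i j = mmul R Y M j i" "\<forall>i\<in>C. \<forall>j\<in>C. mmul R X M i j = mmul R X M j i"
      using X Y by (simp_all add: is_penrose_inverse_def)
    show "\<forall>i\<in>C. \<forall>j\<in>C. mmul C (mmul R Y M) (mmul R X M) i j = mmul R Y M i j"
      using mmul_right_inverse_absorb[OF finR finC _ MX]
      by (simp add: mmul_assoc[OF finR finC] mmul_cong)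
    show "\<forall>i\<in>C. \<forall>j\<in>C. mmul C (mmul R X M) (mmul R Y M) i j = mmul R X M i j"
      using mmul_right_inverse_absorb[OF finR finC _ MY]
      by (simp add: mmul_assoc[OF finR finC] mmul_cong)
  qed
  show ?thesis
  proof (intro ext)
    fix v e
    show "Y v e = X v e"
    proof (cases "v \<in> C \<and> e \<in> R")
      case True
      have "Y v e = mmul R Y (mmul C M X) v e"
        by (rule mmul_right_unit[symmetric]) (use finR True MX in auto)
      also have "\<dots> = mmul C (mmul R Y M) X v e" by (rule mmul_assoc[symmetric, OF finR finC])
      also have "\<dots> = mmul C (mmul R X M) X v e" by (rule mmul_cong) (use YM_XM True in auto)
      also have "\<dots> = X v e" using X True by (simp add: is_penrose_inverse_def)
      finally show ?thesis .
    next
      case False then show ?thesis using X Y by (auto simp: is_penrose_inverse_def)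
    qed
  qed
qed

lemma pinv_eqI: "finite R \<Longrightarrow> finite C \<Longrightarrow> is_penrose_inverse R C M X \<Longrightarrow>
   \<forall>i\<in>R. \<forall>j\<in>R. mmul C M X i j = (if i = j then 1 else 0) \<Longrightarrow> pinv R C M = X"
  unfolding pinv_eq_THE_penrose by (rule the_equality) (auto intro: penrose_inverse_unique)

lemma sum_incid_mult: "f \<in> E \<Longrightarrow> fst f \<in> V \<Longrightarrow> snd f \<in> V \<Longrightarrow> fst f \<noteq> snd f \<Longrightarrow> finite V \<Longrightarrow>
   (\<Sum>v\<in>V. incid V E v f * h v) = h (snd f) - h (fst f)"
proof -
  assume H: "f \<in> E" "fst f \<in> V" "snd f \<in> V" "fst f \<noteq> snd f" "finite V"
  have "(\<Sum>v\<in>V. incid V E v f * h v) = (\<Sum>v\<in>V. (if v = snd f then h v else 0) - (if v = fst f then h v else 0))"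
    using H by (intro sum.cong) (auto simp: incid_def)
  also have "\<dots> = h (snd f) - h (fst f)" using H by (simp add: sum_subtractf sum.delta)
  finally show ?thesis .
qed

lemma abs_sin_diff_le: fixes x y :: real shows "\<bar>sin x - sin y\<bar> \<le> \<bar>x - y\<bar>"
proof -
  have "\<bar>sin x - sin y\<bar> = 2 * \<bar>sin ((x - y) / 2)\<bar> * \<bar>cos ((x + y) / 2)\<bar>"
    by (simp add: sin_diff_sin abs_mult)
  also have "\<dots> \<le> 2 * \<bar>sin ((x - y) / 2)\<bar> * 1"
    by (intro mult_left_mono) auto
  also have "\<dots> \<le> 2 * \<bar>(x - y) / 2\<bar>" using abs_sin_x_le_abs_x[of "(x - y) / 2"] by linarith
  finally show ?thesis by simp
qed

lemma sin_mult_self_ge: fixes x :: real assumes "\<bar>x\<bar> \<le> 1" shows "x * sin x \<ge> x\<^sup>2 / 2"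
proof -
  have a: "\<bar>sin x - (\<Sum>m<3. sin_coeff m * x ^ m)\<bar> \<le> inverse (fact 3) * \<bar>x\<bar> ^ 3"
    by (rule Maclaurin_sin_bound)
  have s: "(\<Sum>m<3. sin_coeff m * x ^ m) = x"
    by (simp add: numeral_3_eq_3 sin_coeff_def)
  have f: "inverse (fact 3 :: real) = 1/6" by (simp add: eval_nat_numeral)
  have b: "\<bar>sin x - x\<bar> \<le> \<bar>x\<bar> ^ 3 / 6" using a unfolding s f by simp
  have "\<bar>x * (sin x - x)\<bar> \<le> \<bar>x\<bar> * (\<bar>x\<bar> ^ 3 / 6)"
    unfolding abs_mult by (rule mult_left_mono[OF b]) simp
  also have "\<dots> = \<bar>x\<bar> ^ 4 / 6" by (simp add: power_eq_if)
  also have "\<dots> \<le> \<bar>x\<bar> ^ 2 / 6"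
  proof -
    have "\<bar>x\<bar> ^ 4 \<le> \<bar>x\<bar>^2" using assms by (intro power_decreasing) auto
    then show ?thesis by simp
  qed
  finally have "\<bar>x * sin x - x\<^sup>2\<bar> \<le> x\<^sup>2 / 6" by (simp add: right_diff_distrib power2_eq_square)
  then have "- (x * sin x - x\<^sup>2) \<le> x\<^sup>2 / 6" by (rule abs_le_D2)
  moreover have "x\<^sup>2 \<ge> 0" by simp
  ultimately show ?thesis by linarith
qed

lemma sum_abs_le_sqrt_card_setnorm: "(\<Sum>e\<in>S. \<bar>f e\<bar>) \<le> sqrt (real (card S)) * setnorm S f"
proof -
  have "(\<Sum>e\<in>S. \<bar>f e\<bar>) = (\<Sum>e\<in>S. \<bar>f e\<bar> * \<bar>(\<lambda>_. 1::real) e\<bar>)" by simp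
  also have "\<dots> \<le> L2_set f S * L2_set (\<lambda>_. 1::real) S" by (rule L2_set_mult_ineq)
  also have "L2_set (\<lambda>_. 1::real) S = sqrt (real (card S))" by (simp add: L2_set_def)
  also have "L2_set f S = setnorm S f" by (simp add: L2_set_def setnorm_def)
  finally show ?thesis by (simp add: mult.commute)
qed

lemma sum_pairs_antisym:
  fixes d s :: "'a \<Rightarrow> 'a \<Rightarrow> real"
  assumes fin: "finite A"
    and d_trans: "\<And>u z w. u \<in> A \<Longrightarrow> z \<in> A \<Longrightarrow> w \<in> A \<Longrightarrow> d u w = d u z + d z w"
    and s_anti: "\<And>u w. u \<in> A \<Longrightarrow> w \<in> A \<Longrightarrow> s w u = - s u w"
  shows "(\<Sum>u\<in>A. \<Sum>w\<in>A. d u w * ((\<Sum>z\<in>A. s w z) - (\<Sum>z\<in>A. s u z)))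
       = - real (card A) * (\<Sum>w\<in>A. \<Sum>z\<in>A. s w z * d w z)"
proof (cases "A = {}")
  case False
  then obtain r where r: "r \<in> A" by blast
  define p where "p w = d r w" for w
  define H where "H w = (\<Sum>z\<in>A. s w z)" for w
  define N where "N = real (card A)"
  have d_pot: "d u w = p w - p u" if "u \<in> A" "w \<in> A" for u w
    using d_trans[OF r that] by (simp add: p_def)
  have swap_s: "(\<Sum>w\<in>A. \<Sum>z\<in>A. s w z * f z) = - (\<Sum>z\<in>A. f z * H z)" for f
  proof -
    have "(\<Sum>w\<in>A. \<Sum>z\<in>A. s w z * f z) = (\<Sum>z\<in>A. \<Sum>w\<in>A. s w z * f z)"
      by (rule sum.swap)
    also have "\<dots> = (\<Sum>z\<in>A. \<Sum>w\<in>A. - (f z * s z w))"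
      using s_anti by (intro sum.cong refl) (metis mult.commute mult_minus_left)
    finally show ?thesis by (simp add: H_def sum_negf sum_distrib_left)
  qed
  have H_sum: "(\<Sum>w\<in>A. H w) = 0"
    using swap_s[of "\<lambda>_. 1"] by (simp add: H_def)
  have "(\<Sum>u\<in>A. \<Sum>w\<in>A. d u w * H u) = - (\<Sum>u\<in>A. \<Sum>w\<in>A. d u w * H w)"
    unfolding sum_negf[symmetric] by (subst sum.swap) (auto intro!: sum.cong simp: d_pot algebra_simps)
  then have "(\<Sum>u\<in>A. \<Sum>w\<in>A. d u w * (H w - H u)) = 2 * (\<Sum>u\<in>A. \<Sum>w\<in>A. d u w * H w)"
    by (simp add: right_diff_distrib sum_subtractf)
  also have "(\<Sum>u\<in>A. \<Sum>w\<in>A. d u w * H w) = (\<Sum>w\<in>A. (N * p w - (\<Sum>u\<in>A. p u)) * H w)"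
    by (subst sum.swap) (auto intro!: sum.cong simp: d_pot N_def sum_subtractf sum_distrib_right[symmetric])
  also have "\<dots> = N * (\<Sum>w\<in>A. p w * H w) - (\<Sum>u\<in>A. p u) * (\<Sum>w\<in>A. H w)"
    by (simp add: left_diff_distrib sum_subtractf sum_distrib_left mult.assoc)
  also have "\<dots> = N * (\<Sum>w\<in>A. p w * H w)" using H_sum by simp
  also have "(\<Sum>w\<in>A. \<Sum>z\<in>A. s w z * d w z) = (\<Sum>w\<in>A. \<Sum>z\<in>A. s w z * p z) - (\<Sum>w\<in>A. p w * H w)"
    by (auto intro!: sum.cong simp: d_pot right_diff_distrib sum_subtractf H_def sum_distrib_left mult.commute)
  then have "- N * (\<Sum>w\<in>A. \<Sum>z\<in>A. s w z * d w z) = 2 * (N * (\<Sum>w\<in>A. p w * H w))"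
    using swap_s[of p] by simp
  finally show ?thesis by (simp add: H_def N_def)
qed simp

lemma Re_cnj_mult_diff:
  fixes x y :: complex
  shows "Re (cnj x * (y - x)) = ((cmod y)\<^sup>2 - (cmod x)\<^sup>2 - (cmod (y - x))\<^sup>2) / 2"
  unfolding cmod_power2 by (simp add: power2_eq_square algebra_simps)

lemma Re_laplacian_form:
  fixes a :: "'a \<Rightarrow> 'a \<Rightarrow> real" and \<phi> :: "'a \<Rightarrow> complex"
  assumes a_sym: "\<And>u z. u \<in> A \<Longrightarrow> z \<in> A \<Longrightarrow> a u z = a z u"
  shows "Re (\<Sum>u\<in>A. cnj (\<phi> u) * (\<Sum>z\<in>A. of_real (a u z) * (\<phi> z - \<phi> u)))
       = - (\<Sum>u\<in>A. \<Sum>z\<in>A. a u z * (cmod (\<phi> z - \<phi> u))\<^sup>2) / 2"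
proof -
  have swap: "(\<Sum>u\<in>A. \<Sum>z\<in>A. a u z * (cmod (\<phi> z))\<^sup>2) = (\<Sum>u\<in>A. \<Sum>z\<in>A. a u z * (cmod (\<phi> u))\<^sup>2)"
    by (subst sum.swap) (auto intro!: sum.cong simp: a_sym)
  have "Re (\<Sum>u\<in>A. cnj (\<phi> u) * (\<Sum>z\<in>A. of_real (a u z) * (\<phi> z - \<phi> u)))
      = (\<Sum>u\<in>A. \<Sum>z\<in>A. a u z * Re (cnj (\<phi> u) * (\<phi> z - \<phi> u)))"
    by (simp add: sum_distrib_left algebra_simps)
  also have "\<dots> = ((\<Sum>u\<in>A. \<Sum>z\<in>A. a u z * (cmod (\<phi> z))\<^sup>2) - (\<Sum>u\<in>A. \<Sum>z\<in>A. a u z * (cmod (\<phi> u))\<^sup>2)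
                  - (\<Sum>u\<in>A. \<Sum>z\<in>A. a u z * (cmod (\<phi> z - \<phi> u))\<^sup>2)) / 2"
    unfolding Re_cnj_mult_diff by (simp only: times_divide_eq_right right_diff_distrib diff_divide_distrib
        sum_subtractf sum_divide_distrib)
  finally show ?thesis by (simp add: swap)
qed

lemma weighted_laplacian_eigenvalue_Re_neg:
  fixes a :: "'a \<Rightarrow> 'a \<Rightarrow> real" and \<psi> :: "'a \<Rightarrow> complex"
  assumes fin: "finite A"
    and a_sym: "\<And>u z. u \<in> A \<Longrightarrow> z \<in> A \<Longrightarrow> a u z = a z u"
    and a_nonneg: "\<And>u z. u \<in> A \<Longrightarrow> z \<in> A \<Longrightarrow> a u z \<ge> 0"
    and eigen: "\<And>u. u \<in> A \<Longrightarrow> (\<Sum>z\<in>A. of_real (a u z) * (\<psi> z - \<psi> u)) - \<mu> * \<psi> u = g"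
    and ij: "i \<in> A" "j \<in> A" "a i j > 0" "\<psi> i \<noteq> \<psi> j"
  shows "Re \<mu> < 0"
proof -
  define mean where "mean = (\<Sum>v\<in>A. \<psi> v) / of_nat (card A)"
  define \<phi> where "\<phi> u = \<psi> u - mean" for u
  have sum_\<phi>: "(\<Sum>u\<in>A. \<phi> u) = 0"
    using ij(1) fin by (simp add: \<phi>_def mean_def sum_subtractf card_gt_0_iff)
  have diff_\<phi>: "\<phi> z - \<phi> u = \<psi> z - \<psi> u" for z u
    by (simp add: \<phi>_def)
  define S where "S = (\<Sum>u\<in>A. (cmod (\<phi> u))\<^sup>2)"
  define Q where "Q = (\<Sum>u\<in>A. \<Sum>z\<in>A. a u z * (cmod (\<phi> z - \<phi> u))\<^sup>2)"
  have "(\<Sum>u\<in>A. cnj (\<phi> u) * (\<Sum>z\<in>A. of_real (a u z) * (\<phi> z - \<phi> u)))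
      = (\<Sum>u\<in>A. cnj (\<phi> u) * (\<mu> * \<psi> u + g))"
    using eigen by (intro sum.cong) (auto simp: diff_\<phi> algebra_simps)
  also have "\<dots> = \<mu> * (\<Sum>u\<in>A. cnj (\<phi> u) * \<phi> u)"
  proof -
    have "cnj (\<phi> u) * (\<mu> * \<psi> u + g) = \<mu> * (cnj (\<phi> u) * \<phi> u) + cnj (\<phi> u) * (\<mu> * mean + g)" for u
      by (simp add: \<phi>_def algebra_simps)
    then have "(\<Sum>u\<in>A. cnj (\<phi> u) * (\<mu> * \<psi> u + g))
        = \<mu> * (\<Sum>u\<in>A. cnj (\<phi> u) * \<phi> u) + cnj (\<Sum>u\<in>A. \<phi> u) * (\<mu> * mean + g)"
      by (simp add: sum.distrib sum_distrib_left sum_distrib_right cnj_sum)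
    then show ?thesis using sum_\<phi> by simp
  qed
  also have "(\<Sum>u\<in>A. cnj (\<phi> u) * \<phi> u) = of_real S"
    by (simp add: S_def mult.commute[of "cnj _"] complex_mult_cnj cmod_power2)
  finally have "Re \<mu> * S = - Q / 2"
    using Re_laplacian_form[of A a \<phi>, OF a_sym] by (simp add: Q_def)
  moreover have "Q > 0"
  proof -
    have nonneg: "\<And>u z. u \<in> A \<Longrightarrow> z \<in> A \<Longrightarrow> a u z * (cmod (\<phi> z - \<phi> u))\<^sup>2 \<ge> 0"
      using a_nonneg by simp
    have "a i j * (cmod (\<phi> j - \<phi> i))\<^sup>2 > 0"
      using ij by (simp add: diff_\<phi>)
    then have "(\<Sum>z\<in>A. a i z * (cmod (\<phi> z - \<phi> i))\<^sup>2) > 0"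
      by (rule sum_pos2[OF fin ij(2)]) (use nonneg ij in auto)
    then show ?thesis
      unfolding Q_def by (rule sum_pos2[OF fin ij(1)]) (use nonneg in \<open>auto intro: sum_nonneg\<close>)
  qed
  moreover have "S \<ge> 0" by (simp add: S_def sum_nonneg)
  ultimately show ?thesis
    using mult_nonneg_nonneg[of "Re \<mu>" S] by linarith
qed

lemma below_level_if_deriv_nonpos:
  fixes W W' :: "real \<Rightarrow> real"
  assumes cont: "continuous_on {0..} W"
    and deriv: "\<And>s. s > 0 \<Longrightarrow> (W has_real_derivative W' s) (at s)"
    and nonpos: "\<And>s. s > 0 \<Longrightarrow> W s < b \<Longrightarrow> W' s \<le> 0"
    and W0: "W 0 < b" and t: "t \<ge> 0"
  shows "W t < b"
proof (rule ccontr)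
  assume "\<not> W t < b"
  define S where "S = {0..t} \<inter> W -` {b..}"
  have "closed S"
    unfolding S_def by (rule continuous_closed_preimage[OF continuous_on_subset[OF cont]]) auto
  moreover have "bounded S" unfolding S_def by (rule bounded_subset[of "{0..t}"]) auto
  ultimately have "compact S" by (simp add: compact_eq_bounded_closed)
  moreover have "t \<in> S" using t \<open>\<not> W t < b\<close> by (simp add: S_def)
  ultimately obtain ts where ts: "ts \<in> S" and ts_min: "\<forall>s\<in>S. ts \<le> s"
    using compact_attains_inf by blast
  have ts_S: "0 \<le> ts" "W ts \<ge> b" using ts by (auto simp: S_def)
  have ts_pos: "ts > 0"
  proof (rule ccontr)
    assume "\<not> ts > 0"
    then have "ts = 0" using ts_S(1) by simp
    then show False using ts_S(2) W0 by simp
  qed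
  have "W ts \<le> W 0"
  proof (rule DERIV_nonpos_imp_decreasing_open[of 0 ts W])
    show "continuous_on {0..ts} W" using cont by (rule continuous_on_subset) auto
    fix s :: real assume s: "0 < s" "s < ts"
    have "s \<notin> S" using ts_min s(2) by force
    then have "W s < b" using s \<open>ts \<in> S\<close> by (auto simp: S_def)
    then have "W' s \<le> 0" using nonpos s(1) by blast
    then show "\<exists>y. (W has_real_derivative y) (at s) \<and> y \<le> 0" using deriv[OF s(1)] by blast
  qed (use ts_pos in simp)
  then show False using ts_S(2) W0 by simp
qed

lemma exp_decay_if_deriv_le:
  fixes W W' :: "real \<Rightarrow> real"
  assumes cont: "continuous_on {0..} W"
    and deriv: "\<And>s. s > 0 \<Longrightarrow> (W has_real_derivative W' s) (at s)"
    and decay: "\<And>s. s > 0 \<Longrightarrow> W' s \<le> - \<alpha> * W s"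
    and t: "t \<ge> 0"
  shows "W t \<le> W 0 * exp (- \<alpha> * t)"
proof -
  define h where "h s = W s * exp (\<alpha> * s)" for s
  have "h t \<le> h 0"
  proof (rule DERIV_nonpos_imp_decreasing_open[of 0 t h])
    show "continuous_on {0..t} h"
      unfolding h_def using continuous_on_subset[OF cont] by (intro continuous_intros) auto
    fix s :: real assume s: "0 < s" "s < t"
    have "(h has_real_derivative W' s * exp (\<alpha> * s) + W s * (exp (\<alpha> * s) * \<alpha>)) (at s)"
      unfolding h_def using s by (auto intro!: derivative_eq_intros deriv)
    moreover have "W' s * exp (\<alpha> * s) + W s * (exp (\<alpha> * s) * \<alpha>) = (W' s + \<alpha> * W s) * exp (\<alpha> * s)"
      by (simp add: algebra_simps)
    moreover have "(W' s + \<alpha> * W s) * exp (\<alpha> * s) \<le> 0"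
      using decay[of s] s by (intro mult_nonpos_nonneg) auto
    ultimately show "\<exists>y. (h has_real_derivative y) (at s) \<and> y \<le> 0" by auto
  qed (use t in simp)
  then have "W t * exp (\<alpha> * t) \<le> W 0" by (simp add: h_def)
  then have "W t \<le> W 0 / exp (\<alpha> * t)" by (simp add: le_divide_eq)
  then show ?thesis by (simp add: exp_minus divide_inverse)
qed

locale kuramoto_clusters =
  fixes n m :: nat and a :: "nat \<Rightarrow> nat \<Rightarrow> real" and c :: "nat \<Rightarrow> nat"
    and Espan :: "nat \<Rightarrow> (nat \<times> nat) set" and Einter :: "(nat \<times> nat) set"
  assumes sym: "\<forall>i<n. \<forall>j<n. a i j = a j i"
    and nonneg: "\<forall>i<n. \<forall>j<n. a i j \<ge> 0"
    and noloop: "\<forall>i<n. a i i = 0"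
    and c_range: "\<forall>i<n. c i < m"
    and clusters_nonempty: "\<forall>k<m. cluster n c k \<noteq> {}"
    and A3: "\<forall>z<m. \<forall>l<m. z \<noteq> l \<longrightarrow>
               (\<forall>i\<in>cluster n c z. \<forall>j\<in>cluster n c z. (\<Sum>k\<in>cluster n c l. a i k - a j k) = 0)"
    and span_k: "\<forall>k<m. is_spanning_tree (cluster n c k) (graph_edges a (cluster n c k)) (Espan k)"
    and span_T: "is_spanning_tree {..<n} (graph_edges a {..<n}) ((\<Union>k<m. Espan k) \<union> Einter)"
begin

abbreviation "P k \<equiv> cluster n c k"
abbreviation "EI \<equiv> \<Union>k<m. Espan k"
abbreviation "ET \<equiv> EI \<union> Einter"

text \<open>The coefficient of the tree coordinate x_e in diff(p(u,w)).\<close>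

definition tcoeff :: "nat \<Rightarrow> nat \<Rightarrow> nat \<times> nat \<Rightarrow> real" where
  "tcoeff u w e = tdiff ET (\<lambda>f. if f = e then 1 else 0) u w"

lemma cluster_subset: "P k \<subseteq> {..<n}" by (auto simp: cluster_def)
lemma finite_cluster: "finite (P k)" using cluster_subset finite_subset by blast
lemma in_cluster: "i \<in> P k \<longleftrightarrow> i < n \<and> c i = k" by (simp add: cluster_def)

lemma Espan_subset_edges: "k < m \<Longrightarrow> Espan k \<subseteq> graph_edges a (P k)"
  using span_k by (simp add: is_spanning_tree_def)

lemma Espan_edgeD: "k < m \<Longrightarrow> (i,j) \<in> Espan k \<Longrightarrow> i \<in> P k \<and> j \<in> P k \<and> i < j \<and> a i j > 0"
  using Espan_subset_edges[of k] by (auto simp: graph_edges_def)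

lemma finite_Espan: "finite (Espan k)" if "k < m"
proof -
  have "Espan k \<subseteq> P k \<times> P k" using Espan_edgeD[OF that] by auto
  then show ?thesis using finite_cluster by (meson finite_SigmaI finite_subset)
qed

lemma oriented_tree_span: "k < m \<Longrightarrow> oriented_tree (P k) (Espan k)"
  unfolding oriented_tree_def using span_k finite_cluster Espan_edgeD
  by (auto simp: is_spanning_tree_def)

lemma oriented_tree_T: "oriented_tree {..<n} ET"
  unfolding oriented_tree_def using span_T
  by (auto simp: is_spanning_tree_def graph_edges_def)

lemma Espan_subset_EI: "k < m \<Longrightarrow> Espan k \<subseteq> EI" by auto
lemma EI_subset_ET: "EI \<subseteq> ET" by auto

lemma finite_EI: "finite EI" using finite_Espan by auto

lemma EI_in_span: "e \<in> EI \<Longrightarrow> e \<in> Espan (c (fst e)) \<and> c (fst e) < m"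
proof -
  assume "e \<in> EI"
  then obtain k where k: "k < m" "e \<in> Espan k" by auto
  then have "fst e \<in> P k" using Espan_edgeD[OF k(1), of "fst e" "snd e"] by auto
  then have "c (fst e) = k" by (simp add: in_cluster)
  then show ?thesis using k by simp
qed

lemma Espan_edge_cluster: "k < m \<Longrightarrow> e \<in> Espan k \<Longrightarrow> c (fst e) = k \<and> c (snd e) = k \<and> fst e < n \<and> snd e < n"
  using Espan_edgeD[of k "fst e" "snd e"] by (auto simp: in_cluster)

lemma Espan_disjoint: "k < m \<Longrightarrow> l < m \<Longrightarrow> e \<in> Espan k \<Longrightarrow> e \<in> Espan l \<Longrightarrow> k = l"
  using Espan_edge_cluster by metis

lemma obtain_span_walk:
  assumes k: "k < m" and u: "u \<in> P k" and w: "w \<in> P k"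
  obtains p where "is_walk (Espan k) p" "p \<noteq> []" "hd p = u" "last p = w"
proof -
  interpret K: oriented_tree "P k" "Espan k" by (rule oriented_tree_span[OF k])
  obtain p where "is_tree_path (Espan k) u w p" using K.path_exists u w by blast
  then show ?thesis using that by (auto simp: is_tree_path_iff_walk)
qed

lemma tdiff_span_expansion:
  assumes k: "k < m" and u: "u \<in> P k" and w: "w \<in> P k"
  shows "tdiff ET y u w = (\<Sum>e\<in>Espan k. y e * tcoeff u w e)"
proof -
  interpret T: oriented_tree "{..<n}" ET by (rule oriented_tree_T)
  obtain p where p: "is_walk (Espan k) p" "p \<noteq> []" "hd p = u" "last p = w"
    using obtain_span_walk[OF k u w] by blast
  have pT: "is_walk ET p" using is_walk_mono[OF p(1)] Espan_subset_EI[OF k] EI_subset_ET by blast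
  have uV: "u \<in> {..<n}" using u cluster_subset by blast
  have "tdiff ET y u w = path_diff y p" using T.tdiff_walk[OF pT p(2)] p uV by simp
  also have "\<dots> = path_diff (\<lambda>f. \<Sum>e\<in>Espan k. y e * (if f = e then 1 else 0)) p"
  proof (rule path_diff_cong[OF p(1)])
    show "\<forall>e\<in>Espan k. y e = (\<Sum>e'\<in>Espan k. y e' * (if e = e' then 1 else 0))"
      using finite_Espan[OF k] by (simp add: if_distrib[of "(*) _"] sum.delta cong: if_cong)
    show "\<forall>(i,j)\<in>Espan k. i < j" using Espan_edgeD[OF k] by auto
  qed
  also have "\<dots> = (\<Sum>e\<in>Espan k. y e * path_diff (\<lambda>f. if f = e then 1 else 0) p)"
    by (rule path_diff_linear)
  also have "\<dots> = (\<Sum>e\<in>Espan k. y e * tcoeff u w e)"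
    unfolding tcoeff_def using T.tdiff_walk[OF pT p(2)] p uV by simp
  finally show ?thesis .
qed

lemma tcoeff_outside: "k < m \<Longrightarrow> u \<in> P k \<Longrightarrow> w \<in> P k \<Longrightarrow> e \<notin> Espan k \<Longrightarrow> tcoeff u w e = 0"
  using tdiff_span_expansion[of k u w "\<lambda>f. if f = e then 1 else 0"] unfolding tcoeff_def[symmetric]
  by (auto intro!: sum.neutral)

lemma tcoeff_root: "r < n \<Longrightarrow> u < n \<Longrightarrow> w < n \<Longrightarrow> tcoeff u w e = tcoeff r w e - tcoeff r u e"
proof -
  interpret T: oriented_tree "{..<n}" ET by (rule oriented_tree_T)
  show "r < n \<Longrightarrow> u < n \<Longrightarrow> w < n \<Longrightarrow> ?thesis" unfolding tcoeff_def by (rule T.tdiff_root) auto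
qed

lemma tcoeff_edge: "k < m \<Longrightarrow> e \<in> Espan k \<Longrightarrow> tcoeff (fst e) (snd e) e' = (if e' = e then 1 else 0)"
proof -
  interpret T: oriented_tree "{..<n}" ET by (rule oriented_tree_T)
  assume "k < m" "e \<in> Espan k"
  then have "e \<in> ET" using Espan_subset_EI EI_subset_ET by blast
  then show ?thesis unfolding tcoeff_def using T.tdiff_edge[of "fst e" "snd e"] by auto
qed

lemma sum_span_telescope:
  assumes k: "k < m" and u: "u \<in> P k" and w: "w \<in> P k"
  shows "(\<Sum>e\<in>Espan k. (g (snd e) - g (fst e)) * tcoeff u w e) = g w - g u"
proof -
  interpret T: oriented_tree "{..<n}" ET by (rule oriented_tree_T)
  obtain p where p: "is_walk (Espan k) p" "p \<noteq> []" "hd p = u" "last p = w"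
    using obtain_span_walk[OF k u w] by blast
  have pT: "is_walk ET p" using is_walk_mono[OF p(1)] Espan_subset_EI[OF k] EI_subset_ET by blast
  have uV: "u \<in> {..<n}" using u cluster_subset by blast
  have "(\<Sum>e\<in>Espan k. (g (snd e) - g (fst e)) * tcoeff u w e) = tdiff ET (\<lambda>e. g (snd e) - g (fst e)) u w"
    using tdiff_span_expansion[OF k u w] by simp
  also have "\<dots> = path_diff (\<lambda>e. g (snd e) - g (fst e)) p"
    using T.tdiff_walk[OF pT p(2)] p uV by simp
  also have "\<dots> = g w - g u"
    by (rule path_diff_telescope[OF p(1) _ p(2), of _ g, simplified p])
      (use Espan_edgeD[OF k] in \<open>auto simp: is_potential_def\<close>)
  finally show ?thesis .
qed

section \<open>The pseudoinverse of the incidence matrix of a spanning tree\<close>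

definition cluster_size :: "nat \<Rightarrow> real" where
  "cluster_size k = real (card (P k))"

text \<open>(B_span,k^T)^\<dagger>: column e is the node potential of the tree edge e, normalised to mean zero.\<close>

definition span_pinv :: "nat \<Rightarrow> nat \<Rightarrow> nat \<times> nat \<Rightarrow> real" where
  "span_pinv k v e =
     (if v \<in> P k \<and> e \<in> Espan k then (1 / cluster_size k) * (\<Sum>u\<in>P k. tcoeff u v e) else 0)"
abbreviation "Ek k \<equiv> graph_edges a (P k)"

lemma cluster_size_pos: "k < m \<Longrightarrow> cluster_size k > 0"
  using clusters_nonempty finite_cluster by (simp add: cluster_size_def card_gt_0_iff)

lemma tcoeff_self: "u < n \<Longrightarrow> tcoeff u u e = 0" using tcoeff_root[of u u u e] by simp
lemma tcoeff_anti: "u < n \<Longrightarrow> v < n \<Longrightarrow> tcoeff v u e = - tcoeff u v e"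
  using tcoeff_root[of u v u e] tcoeff_self[of u e] by simp
lemma tcoeff_trans: "u < n \<Longrightarrow> v < n \<Longrightarrow> w < n \<Longrightarrow> tcoeff u w e - tcoeff u v e = tcoeff v w e"
  using tcoeff_root[of u v w e] by simp

lemma cluster_lt: "v \<in> P k \<Longrightarrow> v < n" by (simp add: in_cluster)

lemma Ek_edgeD: "f \<in> Ek k \<Longrightarrow> fst f \<in> P k \<and> snd f \<in> P k \<and> fst f < snd f \<and> a (fst f) (snd f) > 0"
  by (auto simp: graph_edges_def)

lemma finite_Ek: "finite (Ek k)"
proof -
  have "Ek k \<subseteq> P k \<times> P k" by (auto simp: graph_edges_def)
  then show ?thesis using finite_cluster by (meson finite_SigmaI finite_subset)
qed

lemma span_pinv_diff:
  assumes k: "k < m" and f: "fst f \<in> P k" "snd f \<in> P k" and e': "e' \<in> Espan k"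
  shows "span_pinv k (snd f) e' - span_pinv k (fst f) e' = tcoeff (fst f) (snd f) e'"
proof -
  have "span_pinv k (snd f) e' - span_pinv k (fst f) e'
      = (1 / cluster_size k) * (\<Sum>u\<in>P k. tcoeff u (snd f) e' - tcoeff u (fst f) e')"
    using f e' by (simp add: span_pinv_def sum_subtractf right_diff_distrib)
  also have "\<dots> = (1 / cluster_size k) * (\<Sum>u\<in>P k. tcoeff (fst f) (snd f) e')"
    using f by (intro arg_cong[where f="\<lambda>x. _ * x"] sum.cong) (auto intro: tcoeff_trans cluster_lt)
  also have "\<dots> = tcoeff (fst f) (snd f) e'" using cluster_size_pos[OF k] by (simp add: cluster_size_def)
  finally show ?thesis .
qed

lemma incid_span_pinv:
  assumes k: "k < m" and e: "e \<in> Espan k" and e': "e' \<in> Espan k"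
  shows "mmul (P k) (mtr (incid (P k) (Espan k))) (span_pinv k) e e' = (if e = e' then 1 else 0)"
proof -
  have ed: "fst e \<in> P k" "snd e \<in> P k" "fst e < snd e" using Espan_edgeD[OF k, of "fst e" "snd e"] e by auto
  have "mmul (P k) (mtr (incid (P k) (Espan k))) (span_pinv k) e e'
      = span_pinv k (snd e) e' - span_pinv k (fst e) e'"
    unfolding mmul_def mtr_def by (rule sum_incid_mult) (use e ed finite_cluster in auto)
  also have "\<dots> = tcoeff (fst e) (snd e) e'" by (rule span_pinv_diff) (use k ed e' in auto)
  also have "\<dots> = (if e = e' then 1 else 0)" using tcoeff_edge[OF k e] by auto
  finally show ?thesis .
qed

lemma span_pinv_incid:
  assumes k: "k < m" and v: "v \<in> P k" and v': "v' \<in> P k"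
  shows "mmul (Espan k) (span_pinv k) (mtr (incid (P k) (Espan k))) v v'
       = (if v = v' then 1 else 0) - 1 / cluster_size k"
proof -
  let ?g = "\<lambda>x. if x = v' then (1::real) else 0"
  have "mmul (Espan k) (span_pinv k) (mtr (incid (P k) (Espan k))) v v'
      = (\<Sum>e\<in>Espan k. (1 / cluster_size k) * (\<Sum>u\<in>P k. tcoeff u v e) * (?g (snd e) - ?g (fst e)))"
    unfolding mmul_def mtr_def
  proof (intro sum.cong refl)
    fix e assume e: "e \<in> Espan k"
    have ed: "fst e \<in> P k" "snd e \<in> P k" "fst e < snd e" using Espan_edgeD[OF k, of "fst e" "snd e"] e by auto
    show "span_pinv k v e * incid (P k) (Espan k) v' e
        = 1 / cluster_size k * (\<Sum>u\<in>P k. tcoeff u v e) * (?g (snd e) - ?g (fst e))"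
      using e ed v v' by (auto simp: span_pinv_def incid_def)
  qed
  also have "\<dots> = (1 / cluster_size k) * (\<Sum>u\<in>P k. \<Sum>e\<in>Espan k. (?g (snd e) - ?g (fst e)) * tcoeff u v e)"
    by (simp add: sum_distrib_left sum_distrib_right sum.swap[of _ "Espan k"] mult_ac)
  also have "\<dots> = (1 / cluster_size k) * (\<Sum>u\<in>P k. ?g v - ?g u)"
    by (intro arg_cong[where f="\<lambda>x. (1 / cluster_size k) * x"] sum.cong refl sum_span_telescope[OF k _ v])
  also have "\<dots> = (if v = v' then 1 else 0) - 1 / cluster_size k"
  proof -
    have "(\<Sum>u\<in>P k. ?g v - ?g u) = cluster_size k * ?g v - 1"
      using v' finite_cluster[of k] by (simp add: sum_subtractf cluster_size_def sum.delta')
    then show ?thesis using cluster_size_pos[OF k] by (simp add: field_simps)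
  qed
  finally show ?thesis .
qed

lemma sum_span_pinv: assumes k: "k < m" shows "(\<Sum>v\<in>P k. span_pinv k v e) = 0"
proof (cases "e \<in> Espan k")
  case True
  have S: "(\<Sum>v\<in>P k. \<Sum>u\<in>P k. tcoeff u v e) = - (\<Sum>v\<in>P k. \<Sum>u\<in>P k. tcoeff u v e)"
  proof -
    have "(\<Sum>v\<in>P k. \<Sum>u\<in>P k. tcoeff u v e) = (\<Sum>u\<in>P k. \<Sum>v\<in>P k. tcoeff u v e)" by (rule sum.swap)
    also have "\<dots> = (\<Sum>u\<in>P k. \<Sum>v\<in>P k. - tcoeff v u e)"
      by (intro sum.cong refl) (auto intro: tcoeff_anti cluster_lt)
    finally show ?thesis by (simp add: sum_negf)
  qed
  have "(\<Sum>v\<in>P k. span_pinv k v e) = (1 / cluster_size k) * (\<Sum>v\<in>P k. \<Sum>u\<in>P k. tcoeff u v e)"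
    using True by (simp add: span_pinv_def sum_distrib_left)
  then show ?thesis using S by simp
qed (simp add: span_pinv_def)

lemma pinv_incid_span: "k < m \<Longrightarrow> pinv (Espan k) (P k) (mtr (incid (P k) (Espan k))) = span_pinv k"
proof -
  assume k: "k < m"
  let ?M = "mtr (incid (P k) (Espan k))"
  have MX: "\<forall>i\<in>Espan k. \<forall>j\<in>Espan k. mmul (P k) ?M (span_pinv k) i j = (if i = j then 1 else 0)"
    using incid_span_pinv[OF k] by blast
  have pen: "is_penrose_inverse (Espan k) (P k) ?M (span_pinv k)"
    unfolding is_penrose_inverse_def
  proof (intro conjI)
    show "\<forall>i j. i \<notin> P k \<or> j \<notin> Espan k \<longrightarrow> span_pinv k i j = 0" by (auto simp: span_pinv_def)
    show "\<forall>i\<in>Espan k. \<forall>j\<in>P k. mmul (Espan k) (mmul (P k) ?M (span_pinv k)) ?M i j = ?M i j"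
      using MX finite_Espan[OF k] by (auto intro!: mmul_left_unit)
    show "\<forall>i\<in>P k. \<forall>j\<in>Espan k. mmul (P k) (mmul (Espan k) (span_pinv k) ?M) (span_pinv k) i j = span_pinv k i j"
    proof (intro ballI)
      fix v e assume v: "v \<in> P k" and e: "e \<in> Espan k"
      have "mmul (P k) (mmul (Espan k) (span_pinv k) ?M) (span_pinv k) v e
          = (\<Sum>v'\<in>P k. ((if v = v' then 1 else 0) - 1 / cluster_size k) * span_pinv k v' e)"
        unfolding mmul_def[of "P k"] using span_pinv_incid[OF k v] by (intro sum.cong) (auto simp: mmul_def)
      also have "\<dots> = span_pinv k v e - (1 / cluster_size k) * (\<Sum>v'\<in>P k. span_pinv k v' e)"
        using v finite_cluster[of k]
        by (simp add: left_diff_distrib sum_subtractf sum_distrib_left if_distrib[of "\<lambda>x. x * _"]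
            sum.delta cong: if_cong)
      also have "\<dots> = span_pinv k v e" using sum_span_pinv[OF k] by simp
      finally show "mmul (P k) (mmul (Espan k) (span_pinv k) ?M) (span_pinv k) v e = span_pinv k v e" .
    qed
    show "\<forall>i\<in>Espan k. \<forall>j\<in>Espan k. mmul (P k) ?M (span_pinv k) i j = mmul (P k) ?M (span_pinv k) j i"
      using MX by auto
    show "\<forall>i\<in>P k. \<forall>j\<in>P k. mmul (Espan k) (span_pinv k) ?M i j = mmul (Espan k) (span_pinv k) ?M j i"
      using span_pinv_incid[OF k] by auto
  qed
  show ?thesis by (rule pinv_eqI[OF finite_Espan[OF k] finite_cluster pen MX])
qed

section \<open>The Jacobian at the origin\<close>

definition jac_entry :: "nat \<Rightarrow> nat \<times> nat \<Rightarrow> nat \<times> nat \<Rightarrow> real" where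
  "jac_entry k e e' =
     (\<Sum>z\<in>P k. a (snd e) z * tcoeff (snd e) z e' - a (fst e) z * tcoeff (fst e) z e')"

lemma a_symmetric: "i < n \<Longrightarrow> j < n \<Longrightarrow> a i j = a j i" using sym by blast
lemma a_nonneg: "i < n \<Longrightarrow> j < n \<Longrightarrow> a i j \<ge> 0" using nonneg by blast

lemma sum_Ek_pairs: "(\<Sum>f\<in>Ek k. h f) = (\<Sum>i\<in>P k. \<Sum>j\<in>P k. if (i,j) \<in> Ek k then h (i,j) else 0)"
proof -
  have E: "Ek k = {f \<in> P k \<times> P k. f \<in> Ek k}" by (auto simp: graph_edges_def)
  have fin: "finite (P k \<times> P k)" using finite_cluster by blast
  have "(\<Sum>f\<in>Ek k. h f) = (\<Sum>f\<in>{f \<in> P k \<times> P k. f \<in> Ek k}. h f)"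
    by (subst E) (rule refl)
  also have "\<dots> = (\<Sum>f\<in>P k \<times> P k. if f \<in> Ek k then h f else 0)"
    by (rule sum.inter_filter[OF fin])
  also have "\<dots> = (\<Sum>i\<in>P k. \<Sum>j\<in>P k. if (i,j) \<in> Ek k then h (i,j) else 0)"
    by (subst sum.cartesian_product) simp
  finally show ?thesis .
qed

lemma sum_incid_weighted_tcoeff:
  assumes k: "k < m" and u: "u \<in> P k"
  shows "(\<Sum>f\<in>Ek k. incid (P k) (Ek k) u f * a (fst f) (snd f) * tcoeff (fst f) (snd f) e')
       = - (\<Sum>z\<in>P k. a u z * tcoeff u z e')"
proof -
  have un: "u < n" using u cluster_lt by blast
  have pt: "(if (i,j) \<in> Ek k then incid (P k) (Ek k) u (i,j) * a i j * tcoeff i j e' else 0)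
      = (if j = u then (if i < u then a i u * tcoeff i u e' else 0) else 0)
        - (if i = u then (if u < j then a u j * tcoeff u j e' else 0) else 0)"
    if ij: "i \<in> P k" "j \<in> P k" for i j
  proof (cases "(i,j) \<in> Ek k")
    case True
    then have "i < j" by (auto simp: graph_edges_def)
    then show ?thesis using True u by (auto simp: incid_def)
  next
    case False
    have "i < j \<Longrightarrow> a i j = 0" using False ij a_nonneg[of i j] cluster_lt[of i k] cluster_lt[of j k]
      by (fastforce simp: graph_edges_def)
    then show ?thesis using False by auto
  qed
  have "(\<Sum>f\<in>Ek k. incid (P k) (Ek k) u f * a (fst f) (snd f) * tcoeff (fst f) (snd f) e')
      = (\<Sum>i\<in>P k. \<Sum>j\<in>P k. (if j = u then (if i < u then a i u * tcoeff i u e' else 0) else 0)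
        - (if i = u then (if u < j then a u j * tcoeff u j e' else 0) else 0))"
    unfolding sum_Ek_pairs by (intro sum.cong refl) (simp only: fst_conv snd_conv; rule pt; assumption)
  also have "\<dots> = (\<Sum>i\<in>P k. if i < u then a i u * tcoeff i u e' else 0)
                 - (\<Sum>j\<in>P k. if u < j then a u j * tcoeff u j e' else 0)"
    using u finite_cluster[of k] by (simp add: sum_subtractf sum.delta' sum.swap[of _ "P k" "P k"])
  also have "(\<Sum>i\<in>P k. if i < u then a i u * tcoeff i u e' else 0)
      = - (\<Sum>i\<in>P k. if i < u then a u i * tcoeff u i e' else 0)"
    unfolding sum_negf[symmetric]
    by (intro sum.cong refl)
      (use un in \<open>auto simp: a_symmetric[OF cluster_lt un] tcoeff_anti[OF un cluster_lt]\<close>)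
  also have "- (\<Sum>i\<in>P k. if i < u then a u i * tcoeff u i e' else 0)
      - (\<Sum>j\<in>P k. if u < j then a u j * tcoeff u j e' else 0)
       = - (\<Sum>z\<in>P k. a u z * tcoeff u z e')"
  proof -
    have "(\<Sum>z\<in>P k. a u z * tcoeff u z e')
        = (\<Sum>z\<in>P k. (if z < u then a u z * tcoeff u z e' else 0) + (if u < z then a u z * tcoeff u z e' else 0))"
      using noloop un by (intro sum.cong refl) auto
    then show ?thesis by (simp add: sum.distrib)
  qed
  finally show ?thesis .
qed

lemma J_blk_eq_jac_entry:
  assumes k: "k < m" and e: "e \<in> Espan k" and e': "e' \<in> Espan k"
  shows "J_blk n c a Espan k e e' = jac_entry k e e'"
proof -
  let ?B = "incid (P k) (Ek k)"
  let ?BB = "mmul (P k) (mtr (incid (P k) (Espan k))) ?B"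
  let ?W = "mdiag (\<lambda>f. a (fst f) (snd f))"
  have ed: "fst e \<in> P k" "snd e \<in> P k" "fst e < snd e"
    using Espan_edgeD[OF k, of "fst e" "snd e"] e by auto
  have T: "T_intra n c a Espan k f e' = tcoeff (fst f) (snd f) e'" if f: "f \<in> Ek k" for f
  proof -
    have fd: "fst f \<in> P k" "snd f \<in> P k" "fst f < snd f" using Ek_edgeD[OF f] by auto
    have "T_intra n c a Espan k f e' = mmul (P k) (mtr ?B) (span_pinv k) f e'"
      by (simp add: T_intra_def Let_def pinv_incid_span[OF k])
    also have "\<dots> = span_pinv k (snd f) e' - span_pinv k (fst f) e'"
      unfolding mmul_def mtr_def by (rule sum_incid_mult) (use f fd finite_cluster in auto)
    also have "\<dots> = tcoeff (fst f) (snd f) e'" by (rule span_pinv_diff) (use k fd e' in auto)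
    finally show ?thesis .
  qed
  have BB: "?BB e f = ?B (snd e) f - ?B (fst e) f" for f
    unfolding mmul_def mtr_def by (rule sum_incid_mult) (use e ed finite_cluster in auto)
  have BBW: "mmul (Ek k) ?BB ?W e f = ?BB e f * a (fst f) (snd f)" if f: "f \<in> Ek k" for f
    unfolding mmul_def[of "Ek k" ?BB] mdiag_def
    using f finite_Ek[of k] by (simp add: if_distrib[of "(*) _"] sum.delta' cong: if_cong)
  have "J_blk n c a Espan k e e' = - mmul (Ek k) (mmul (Ek k) ?BB ?W) (T_intra n c a Espan k) e e'"
    by (simp add: J_blk_def Let_def)
  also have "\<dots> = (\<Sum>f\<in>Ek k. ?B (fst e) f * a (fst f) (snd f) * tcoeff (fst f) (snd f) e')
                 - (\<Sum>f\<in>Ek k. ?B (snd e) f * a (fst f) (snd f) * tcoeff (fst f) (snd f) e')"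
    unfolding mmul_def[of "Ek k" "mmul (Ek k) ?BB ?W"]
    by (simp add: BBW T BB sum_subtractf left_diff_distrib cong: sum.cong)
  also have "\<dots> = (\<Sum>z\<in>P k. a (snd e) z * tcoeff (snd e) z e')
                 - (\<Sum>z\<in>P k. a (fst e) z * tcoeff (fst e) z e')"
    using sum_incid_weighted_tcoeff[OF k ed(2)] sum_incid_weighted_tcoeff[OF k ed(1)] by simp
  finally show ?thesis by (simp add: jac_entry_def sum_subtractf)
qed

definition F_intra :: "(nat \<times> nat \<Rightarrow> real) \<Rightarrow> nat \<times> nat \<Rightarrow> real" where
  "F_intra y = Fcomp n c a ET (ext_edges EI y)"

lemma F_intra_span_expansion:
  assumes k: "k < m" and e: "e \<in> Espan k"
  shows "F_intra x e = (\<Sum>z\<in>P k.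
      a (snd e) z * sin (\<Sum>e'\<in>Espan k. x e' * tcoeff (snd e) z e')
      - a (fst e) z * sin (\<Sum>e'\<in>Espan k. x e' * tcoeff (fst e) z e'))"
proof -
  have ck: "c (fst e) = k" and ed: "fst e \<in> P k" "snd e \<in> P k"
    using Espan_edge_cluster[OF k e] by (auto simp: in_cluster)
  have ext: "\<And>e'. e' \<in> Espan k \<Longrightarrow> ext_edges EI x e' = x e'"
    using Espan_subset_EI[OF k] by (auto simp: ext_edges_def)
  have td: "tdiff ET (ext_edges EI x) u z = (\<Sum>e'\<in>Espan k. x e' * tcoeff u z e')" if "u \<in> P k" "z \<in> P k" for u z
    using tdiff_span_expansion[OF k that] ext by simp
  show ?thesis unfolding F_intra_def Fcomp_def ck using td ed by (intro sum.cong refl) auto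
qed

lemma sum_delta_tcoeff:
  assumes k: "k < m" and u: "u \<in> P k" and z: "z \<in> P k"
  shows "(\<Sum>e''\<in>Espan k. (if e'' = e' then t else 0) * tcoeff u z e'') = t * tcoeff u z e'"
proof (cases "e' \<in> Espan k")
  case True then show ?thesis
    using finite_Espan[OF k] by (simp add: if_distrib[of "\<lambda>x. x * _"] sum.delta' cong: if_cong)
next
  case False then show ?thesis using tcoeff_outside[OF k u z False] by (auto intro!: sum.neutral)
qed

definition jac :: "nat \<times> nat \<Rightarrow> nat \<times> nat \<Rightarrow> real" where
  "jac e e' = (if c (fst e) = c (fst e') then J_blk n c a Espan (c (fst e)) e e' else 0)"

lemma jac_eq_jac_entry:
  assumes k: "k < m" and e: "e \<in> Espan k" and e': "e' \<in> EI"
  shows "jac e e' = jac_entry k e e'"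
proof -
  have ck: "c (fst e) = k" using Espan_edge_cluster[OF k e] by simp
  show ?thesis
  proof (cases "c (fst e') = k")
    case True
    then have "e' \<in> Espan k" using EI_in_span[OF e'] by simp
    then show ?thesis using J_blk_eq_jac_entry[OF k e] ck True by (simp add: jac_def)
  next
    case False
    then have ne: "e' \<notin> Espan k" using Espan_edge_cluster[OF k] by blast
    have ed: "fst e \<in> P k" "snd e \<in> P k" using Espan_edge_cluster[OF k e] by (auto simp: in_cluster)
    have "jac_entry k e e' = 0"
      unfolding jac_entry_def using tcoeff_outside[OF k _ _ ne] ed by (auto intro!: sum.neutral)
    then show ?thesis using False ck by (simp add: jac_def)
  qed
qed

lemma F_intra_partial_deriv:
  assumes e: "e \<in> EI" and e': "e' \<in> EI"
  shows "((\<lambda>t. F_intra (\<lambda>f. if f = e' then t else 0) e) has_real_derivative jac e e') (at 0)"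
proof -
  define k where "k = c (fst e)"
  have k: "k < m" and ek: "e \<in> Espan k" using EI_in_span[OF e] k_def by auto
  have ed: "fst e \<in> P k" "snd e \<in> P k" using Espan_edge_cluster[OF k ek] by (auto simp: in_cluster)
  have "F_intra (\<lambda>f. if f = e' then t else 0) e
      = (\<Sum>z\<in>P k. a (snd e) z * sin (t * tcoeff (snd e) z e') - a (fst e) z * sin (t * tcoeff (fst e) z e'))"
    for t
    unfolding F_intra_span_expansion[OF k ek] using sum_delta_tcoeff[OF k] ed by (intro sum.cong refl) simp
  moreover have "((\<lambda>t. \<Sum>z\<in>P k. a (snd e) z * sin (t * tcoeff (snd e) z e')
                               - a (fst e) z * sin (t * tcoeff (fst e) z e'))
      has_real_derivative jac_entry k e e') (at 0)"
    unfolding jac_entry_def by (auto intro!: derivative_eq_intros sum.cong)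
  ultimately show ?thesis using jac_eq_jac_entry[OF k ek e'] by simp
qed

lemma constant_along_span:
  assumes k: "k < m" and g: "\<forall>e\<in>Espan k. g (fst e) = g (snd e)" and u: "u \<in> P k" and r: "r \<in> P k"
  shows "g u = g r"
proof -
  interpret K: oriented_tree "P k" "Espan k" by (rule oriented_tree_span[OF k])
  have "(r,u) \<in> (undirected (Espan k))\<^sup>*" using K.undirected_connected r u by blast
  then have "g u = g r"
  proof (induction rule: rtrancl_induct)
    case (step y z)
    then have "(y,z) \<in> Espan k \<or> (z,y) \<in> Espan k" by (auto simp: undirected_def)
    then have "g y = g z" using g by force
    then show ?case using step by simp
  qed simp
  then show ?thesis .
qed

lemma jac_entry_outside: "k < m \<Longrightarrow> e \<in> Espan k \<Longrightarrow> e' \<notin> Espan k \<Longrightarrow> jac_entry k e e' = 0"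
proof -
  assume k: "k < m" and e: "e \<in> Espan k" and ne: "e' \<notin> Espan k"
  have ed: "fst e \<in> P k" "snd e \<in> P k" using Espan_edge_cluster[OF k e] by (auto simp: in_cluster)
  show ?thesis unfolding jac_entry_def using tcoeff_outside[OF k _ _ ne] ed by (auto intro!: sum.neutral)
qed

definition node_potential :: "nat \<Rightarrow> nat \<Rightarrow> (nat \<times> nat \<Rightarrow> complex) \<Rightarrow> nat \<Rightarrow> complex" where
  "node_potential k r v u = (\<Sum>e\<in>Espan k. complex_of_real (tcoeff r u e) * v e)"

lemma sum_tcoeff_node_potential:
  assumes k: "k < m" and r: "r \<in> P k" and uz: "u \<in> P k" "z \<in> P k"
  shows "(\<Sum>e\<in>Espan k. complex_of_real (tcoeff u z e) * v e)
       = node_potential k r v z - node_potential k r v u"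
proof -
  have "(\<Sum>e\<in>Espan k. complex_of_real (tcoeff u z e) * v e)
      = (\<Sum>e\<in>Espan k. complex_of_real (tcoeff r z e) * v e - complex_of_real (tcoeff r u e) * v e)"
    using tcoeff_root[of r u z] uz r cluster_lt by (intro sum.cong refl) (simp add: left_diff_distrib)
  then show ?thesis by (simp add: node_potential_def sum_subtractf)
qed

lemma node_potential_edge:
  assumes k: "k < m" and r: "r \<in> P k" and e: "e \<in> Espan k"
  shows "v e = node_potential k r v (snd e) - node_potential k r v (fst e)"
proof -
  have "(\<Sum>e'\<in>Espan k. complex_of_real (tcoeff (fst e) (snd e) e') * v e') = v e"
    using tcoeff_edge[OF k e] e finite_Espan[OF k]
    by (simp add: if_distrib[of "\<lambda>x. complex_of_real x * _"] sum.delta' cong: if_cong)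
  then show ?thesis
    using sum_tcoeff_node_potential[OF k r] Espan_edge_cluster[OF k e] by (simp add: in_cluster)
qed

lemma jac_mult_node_potential:
  fixes v :: "nat \<times> nat \<Rightarrow> complex"
  assumes k: "k < m" and r: "r \<in> P k" and e: "e \<in> Espan k"
  defines "h \<equiv> \<lambda>u. \<Sum>z\<in>P k. complex_of_real (a u z) * (node_potential k r v z - node_potential k r v u)"
  shows "(\<Sum>e'\<in>EI. complex_of_real (jac e e') * v e') = h (snd e) - h (fst e)"
proof -
  have ed: "fst e \<in> P k" "snd e \<in> P k" using Espan_edge_cluster[OF k e] by (auto simp: in_cluster)
  have "(\<Sum>e'\<in>EI. complex_of_real (jac e e') * v e') = (\<Sum>e'\<in>EI. complex_of_real (jac_entry k e e') * v e')"
    using jac_eq_jac_entry[OF k e] by simp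
  also have "\<dots> = (\<Sum>e'\<in>Espan k. complex_of_real (jac_entry k e e') * v e')"
    by (rule sum.mono_neutral_right[OF finite_EI Espan_subset_EI[OF k]])
      (use jac_entry_outside[OF k e] in auto)
  also have "\<dots> = (\<Sum>e'\<in>Espan k. \<Sum>z\<in>P k.
                     complex_of_real (a (snd e) z) * (complex_of_real (tcoeff (snd e) z e') * v e')
                   - complex_of_real (a (fst e) z) * (complex_of_real (tcoeff (fst e) z e') * v e'))"
    unfolding jac_entry_def of_real_sum of_real_diff of_real_mult
    by (intro sum.cong refl) (simp add: sum_distrib_left right_diff_distrib mult_ac)
  also have "\<dots> = (\<Sum>z\<in>P k.
                     complex_of_real (a (snd e) z) * (\<Sum>e'\<in>Espan k. complex_of_real (tcoeff (snd e) z e') * v e')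
                   - complex_of_real (a (fst e) z) * (\<Sum>e'\<in>Espan k. complex_of_real (tcoeff (fst e) z e') * v e'))"
    by (simp add: sum.swap[of _ "Espan k"] sum_subtractf sum_distrib_left)
  also have "\<dots> = h (snd e) - h (fst e)"
    using sum_tcoeff_node_potential[OF k r] ed by (simp add: h_def sum_subtractf)
  finally show ?thesis .
qed

lemma jac_hurwitz: "is_hurwitz EI jac"
  unfolding is_hurwitz_def
proof (intro allI impI, elim conjE)
  fix \<mu> :: complex and v :: "nat \<times> nat \<Rightarrow> complex"
  assume nz: "\<exists>e\<in>EI. v e \<noteq> 0"
    and eig: "\<forall>e\<in>EI. (\<Sum>e'\<in>EI. complex_of_real (jac e e') * v e') = \<mu> * v e"
  obtain e0 where e0: "e0 \<in> EI" "v e0 \<noteq> 0" using nz by blast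
  define k where "k = c (fst e0)"
  have k: "k < m" and e0k: "e0 \<in> Espan k" using EI_in_span[OF e0(1)] k_def by auto
  have e0d: "fst e0 \<in> P k" "snd e0 \<in> P k" "a (fst e0) (snd e0) > 0"
    using Espan_edgeD[OF k, of "fst e0" "snd e0"] e0k by auto
  define r where "r = fst e0"
  have r: "r \<in> P k" using e0d by (simp add: r_def)
  define \<psi> where "\<psi> = node_potential k r v"
  define h where "h u = (\<Sum>z\<in>P k. complex_of_real (a u z) * (\<psi> z - \<psi> u))" for u
  define g where "g u = h u - \<mu> * \<psi> u" for u
  have "g (fst e) = g (snd e)" if e: "e \<in> Espan k" for e
  proof -
    have "h (snd e) - h (fst e) = \<mu> * v e"
      using eig jac_mult_node_potential[OF k r e, of v] Espan_subset_EI[OF k] e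
      by (auto simp: h_def \<psi>_def)
    then show ?thesis
      using node_potential_edge[OF k r e, of v] by (simp add: g_def \<psi>_def algebra_simps)
  qed
  then have g_const: "g u = g r" if "u \<in> P k" for u
    using constant_along_span[OF k _ that r] by blast
  show "Re \<mu> < 0"
  proof (rule weighted_laplacian_eigenvalue_Re_neg[OF finite_cluster])
    show "a u z = a z u" if "u \<in> P k" "z \<in> P k" for u z
      using a_symmetric cluster_lt that by blast
    show "a u z \<ge> 0" if "u \<in> P k" "z \<in> P k" for u z
      using a_nonneg cluster_lt that by blast
    show "(\<Sum>z\<in>P k. of_real (a u z) * (\<psi> z - \<psi> u)) - \<mu> * \<psi> u = g r" if "u \<in> P k" for u
      using g_const[OF that] by (simp add: g_def h_def)
    show "\<psi> (fst e0) \<noteq> \<psi> (snd e0)" using node_potential_edge[OF k r e0k, of v] e0(2) by (auto simp: \<psi>_def)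
  qed (use e0d in auto)
qed

section \<open>Exponential stability of the intra-cluster dynamics\<close>

definition intra_diff :: "nat \<Rightarrow> (nat \<times> nat \<Rightarrow> real) \<Rightarrow> nat \<Rightarrow> nat \<Rightarrow> real" where
  "intra_diff k y u w = (\<Sum>e\<in>Espan k. y e * tcoeff u w e)"

definition lyap :: "(nat \<times> nat \<Rightarrow> real) \<Rightarrow> real" where
  "lyap y = (\<Sum>k<m. \<Sum>u\<in>P k. \<Sum>w\<in>P k. (intra_diff k y u w)\<^sup>2)"

definition sqnorm :: "(nat \<times> nat \<Rightarrow> real) \<Rightarrow> real" where
  "sqnorm y = (\<Sum>e\<in>EI. (y e)\<^sup>2)"

definition coupling :: "nat \<Rightarrow> (nat \<times> nat \<Rightarrow> real) \<Rightarrow> nat \<Rightarrow> real" where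
  "coupling k y u = (\<Sum>z\<in>P k. a u z * sin (intra_diff k y u z))"

definition lyap_deriv :: "(nat \<times> nat \<Rightarrow> real) \<Rightarrow> real" where
  "lyap_deriv y =
     (\<Sum>k<m. \<Sum>u\<in>P k. \<Sum>w\<in>P k. 2 * intra_diff k y u w * (\<Sum>e\<in>Espan k. F_intra y e * tcoeff u w e))"

lemma intra_diff_anti: "u \<in> P k \<Longrightarrow> w \<in> P k \<Longrightarrow> intra_diff k y w u = - intra_diff k y u w"
proof -
  assume H: "u \<in> P k" "w \<in> P k"
  have "\<And>e. tcoeff w u e = - tcoeff u w e" using tcoeff_anti[of u w] H cluster_lt by blast
  then show ?thesis unfolding intra_diff_def by (simp add: sum_negf)
qed

lemma intra_diff_trans:
  "u \<in> P k \<Longrightarrow> z \<in> P k \<Longrightarrow> w \<in> P k \<Longrightarrow> intra_diff k y u w = intra_diff k y u z + intra_diff k y z w"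
proof -
  assume H: "u \<in> P k" "z \<in> P k" "w \<in> P k"
  have "\<And>e. tcoeff u w e = tcoeff u z e + tcoeff z w e"
    using tcoeff_root[of u z w] tcoeff_root[of u u w] H cluster_lt by force
  then show ?thesis unfolding intra_diff_def by (simp add: distrib_left sum.distrib)
qed

lemma intra_diff_edge: "k < m \<Longrightarrow> e \<in> Espan k \<Longrightarrow> intra_diff k y (fst e) (snd e) = y e"
  unfolding intra_diff_def using tcoeff_edge finite_Espan
  by (simp add: if_distrib[of "(*) _"] sum.delta' cong: if_cong)

lemma F_intra_eq_coupling: "k < m \<Longrightarrow> e \<in> Espan k \<Longrightarrow> F_intra y e = coupling k y (snd e) - coupling k y (fst e)"
  unfolding F_intra_span_expansion coupling_def intra_diff_def by (simp add: sum_subtractf)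

lemma sum_F_intra_tcoeff: assumes k: "k < m" and u: "u \<in> P k" and w: "w \<in> P k"
  shows "(\<Sum>e\<in>Espan k. F_intra y e * tcoeff u w e) = coupling k y w - coupling k y u"
proof -
  have "(\<Sum>e\<in>Espan k. F_intra y e * tcoeff u w e)
      = (\<Sum>e\<in>Espan k. (coupling k y (snd e) - coupling k y (fst e)) * tcoeff u w e)"
    using F_intra_eq_coupling[OF k] by simp
  also have "\<dots> = coupling k y w - coupling k y u" by (rule sum_span_telescope[OF k u w])
  finally show ?thesis .
qed

lemma lyap_deriv_block_eq:
  assumes k: "k < m"
  shows "(\<Sum>u\<in>P k. \<Sum>w\<in>P k. 2 * intra_diff k y u w * (\<Sum>e\<in>Espan k. F_intra y e * tcoeff u w e))
       = - 2 * cluster_size k * (\<Sum>w\<in>P k. \<Sum>z\<in>P k. a w z * sin (intra_diff k y w z) * intra_diff k y w z)"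
proof -
  have "(\<Sum>u\<in>P k. \<Sum>w\<in>P k. intra_diff k y u w * (coupling k y w - coupling k y u))
      = - real (card (P k)) * (\<Sum>w\<in>P k. \<Sum>z\<in>P k. a w z * sin (intra_diff k y w z) * intra_diff k y w z)"
    unfolding coupling_def
  proof (rule sum_pairs_antisym[OF finite_cluster])
    show "intra_diff k y u w = intra_diff k y u z + intra_diff k y z w"
      if "u \<in> P k" "z \<in> P k" "w \<in> P k" for u z w
      using intra_diff_trans that by blast
    show "a w u * sin (intra_diff k y w u) = - (a u w * sin (intra_diff k y u w))"
      if u: "u \<in> P k" and w: "w \<in> P k" for u w
      using intra_diff_anti[OF u w] a_symmetric[OF cluster_lt[OF u] cluster_lt[OF w]] by simp
  qed
  moreover have "(\<Sum>u\<in>P k. \<Sum>w\<in>P k. 2 * intra_diff k y u w * (\<Sum>e\<in>Espan k. F_intra y e * tcoeff u w e))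
      = 2 * (\<Sum>u\<in>P k. \<Sum>w\<in>P k. intra_diff k y u w * (coupling k y w - coupling k y u))"
    by (simp add: sum_F_intra_tcoeff[OF k] sum_distrib_left mult.assoc cong: sum.cong)
  ultimately show ?thesis by (simp add: cluster_size_def)
qed

lemma lyap_deriv_eq:
  "lyap_deriv y = (\<Sum>k<m. - 2 * cluster_size k *
     (\<Sum>w\<in>P k. \<Sum>z\<in>P k. a w z * sin (intra_diff k y w z) * intra_diff k y w z))"
  unfolding lyap_deriv_def using lyap_deriv_block_eq by (intro sum.cong) auto

lemma sqnorm_split: "sqnorm y = (\<Sum>k<m. \<Sum>e\<in>Espan k. (y e)\<^sup>2)"
  unfolding sqnorm_def
  by (rule sum.UNION_disjoint) (auto simp: finite_Espan dest: Espan_disjoint)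

lemma sum_span_le_sqnorm:
  fixes y :: "nat \<times> nat \<Rightarrow> real"
  assumes k: "k < m"
  shows "(\<Sum>e\<in>Espan k. (y e)\<^sup>2) \<le> sqnorm y"
proof -
  have "(\<Sum>e\<in>Espan k. (y e)\<^sup>2) \<le> (\<Sum>e\<in>EI. (y e)\<^sup>2)"
    using sum_mono2[OF finite_EI Espan_subset_EI[OF k], of "\<lambda>e. (y e)\<^sup>2"] by simp
  then show ?thesis unfolding sqnorm_def .
qed

lemma Espan_subset_cluster: "k < m \<Longrightarrow> Espan k \<subseteq> P k \<times> P k"
  using Espan_edgeD by auto

lemma sum_cluster_pairs: "(\<Sum>p\<in>P k \<times> P k. f (fst p) (snd p)) = (\<Sum>u\<in>P k. \<Sum>w\<in>P k. f u w)"
  by (subst sum.cartesian_product) (simp add: case_prod_beta)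

lemma sqnorm_le_lyap: "sqnorm y \<le> lyap y"
proof -
  have "(\<Sum>e\<in>Espan k. (y e)\<^sup>2) \<le> (\<Sum>u\<in>P k. \<Sum>w\<in>P k. (intra_diff k y u w)\<^sup>2)" if k: "k < m" for k
  proof -
    have "(\<Sum>e\<in>Espan k. (y e)\<^sup>2) = (\<Sum>e\<in>Espan k. (intra_diff k y (fst e) (snd e))\<^sup>2)"
      using intra_diff_edge[OF k] by simp
    also have "\<dots> \<le> (\<Sum>p\<in>P k \<times> P k. (intra_diff k y (fst p) (snd p))\<^sup>2)"
      by (rule sum_mono2[OF _ Espan_subset_cluster[OF k]]) (use finite_cluster in auto)
    also have "\<dots> = (\<Sum>u\<in>P k. \<Sum>w\<in>P k. (intra_diff k y u w)\<^sup>2)" by (rule sum_cluster_pairs)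
    finally show ?thesis .
  qed
  then show ?thesis unfolding sqnorm_split lyap_def by (intro sum_mono) auto
qed

definition lyap_const :: "real" where
  "lyap_const = (\<Sum>k<m. \<Sum>u\<in>P k. \<Sum>w\<in>P k. \<Sum>e\<in>Espan k. (tcoeff u w e)\<^sup>2) + 1"

lemma lyap_const_pos: "lyap_const > 0"
proof -
  have "(\<Sum>k<m. \<Sum>u\<in>P k. \<Sum>w\<in>P k. \<Sum>e\<in>Espan k. (tcoeff u w e)\<^sup>2) \<ge> 0"
    by (intro sum_nonneg) auto
  then show ?thesis unfolding lyap_const_def by simp
qed

lemma lyap_le: "lyap y \<le> lyap_const * sqnorm y"
proof -
  have Nn: "sqnorm y \<ge> 0" unfolding sqnorm_def by (intro sum_nonneg) auto
  have "lyap y \<le> (\<Sum>k<m. \<Sum>u\<in>P k. \<Sum>w\<in>P k. (\<Sum>e\<in>Espan k. (tcoeff u w e)\<^sup>2) * sqnorm y)"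
    unfolding lyap_def
  proof (intro sum_mono)
    fix k u w assume k: "k \<in> {..<m}"
    have "(intra_diff k y u w)\<^sup>2 \<le> (\<Sum>e\<in>Espan k. (y e)\<^sup>2) * (\<Sum>e\<in>Espan k. (tcoeff u w e)\<^sup>2)"
      unfolding intra_diff_def by (rule Cauchy_Schwarz_ineq_sum)
    also have "\<dots> \<le> sqnorm y * (\<Sum>e\<in>Espan k. (tcoeff u w e)\<^sup>2)"
      by (rule mult_right_mono[OF sum_span_le_sqnorm]) (use k in \<open>auto intro: sum_nonneg\<close>)
    finally show "(intra_diff k y u w)\<^sup>2 \<le> (\<Sum>e\<in>Espan k. (tcoeff u w e)\<^sup>2) * sqnorm y"
      by (simp add: mult.commute)
  qed
  also have "\<dots> = (lyap_const - 1) * sqnorm y" unfolding lyap_const_def by (simp add: sum_distrib_right)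
  also have "\<dots> \<le> lyap_const * sqnorm y" using Nn by (simp add: algebra_simps)
  finally show ?thesis .
qed

text \<open>The value 1 for EI = {} only keeps the constant positive.\<close>

definition min_weight :: "real" where
  "min_weight = (if EI = {} then 1 else Min ((\<lambda>e. a (fst e) (snd e)) ` EI))"

lemma min_weight_pos: "min_weight > 0"
proof (cases "EI = {}")
  case False
  have "\<forall>x\<in>(\<lambda>e. a (fst e) (snd e)) ` EI. x > 0"
    using EI_in_span Espan_edgeD by fastforce
  then show ?thesis using False finite_EI by (simp add: min_weight_def)
qed (simp add: min_weight_def)

lemma min_weight_le: "e \<in> EI \<Longrightarrow> min_weight \<le> a (fst e) (snd e)"
  using finite_EI by (auto simp: min_weight_def)

lemma intra_diff_sq_le_lyap: "k < m \<Longrightarrow> u \<in> P k \<Longrightarrow> w \<in> P k \<Longrightarrow> (intra_diff k y u w)\<^sup>2 \<le> lyap y"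
proof -
  assume k: "k < m" and u: "u \<in> P k" and w: "w \<in> P k"
  have "(intra_diff k y u w)\<^sup>2 \<le> (\<Sum>w'\<in>P k. (intra_diff k y u w')\<^sup>2)"
    by (rule member_le_sum[OF w]) (auto simp: finite_cluster)
  also have "\<dots> \<le> (\<Sum>u'\<in>P k. \<Sum>w'\<in>P k. (intra_diff k y u' w')\<^sup>2)"
    by (rule member_le_sum[OF u, of "\<lambda>u'. \<Sum>w'\<in>P k. (intra_diff k y u' w')\<^sup>2"])
      (auto simp: finite_cluster intro: sum_nonneg)
  also have "\<dots> \<le> lyap y" unfolding lyap_def
    by (rule member_le_sum[of k "{..<m}" "\<lambda>k. \<Sum>u'\<in>P k. \<Sum>w'\<in>P k. (intra_diff k y u' w')\<^sup>2"])
      (use k in \<open>auto intro!: sum_nonneg\<close>)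
  finally show ?thesis .
qed

lemma min_weight_sum_span_le:
  assumes k: "k < m"
  shows "min_weight * (\<Sum>e\<in>Espan k. (y e)\<^sup>2) \<le> (\<Sum>w\<in>P k. \<Sum>z\<in>P k. a w z * (intra_diff k y w z)\<^sup>2)"
proof -
  have "min_weight * (\<Sum>e\<in>Espan k. (y e)\<^sup>2) = (\<Sum>e\<in>Espan k. min_weight * (y e)\<^sup>2)"
    by (simp add: sum_distrib_left)
  also have "\<dots> \<le> (\<Sum>e\<in>Espan k. a (fst e) (snd e) * (intra_diff k y (fst e) (snd e))\<^sup>2)"
    using min_weight_le[OF subsetD[OF Espan_subset_EI[OF k]]] intra_diff_edge[OF k]
    by (auto intro!: sum_mono mult_right_mono)
  also have "\<dots> \<le> (\<Sum>p\<in>P k \<times> P k. a (fst p) (snd p) * (intra_diff k y (fst p) (snd p))\<^sup>2)"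
    by (rule sum_mono2[OF _ Espan_subset_cluster[OF k]]) (use finite_cluster a_nonneg cluster_lt in auto)
  also have "\<dots> = (\<Sum>w\<in>P k. \<Sum>z\<in>P k. a w z * (intra_diff k y w z)\<^sup>2)" by (rule sum_cluster_pairs)
  finally show ?thesis .
qed

lemma sum_weighted_sq_le_sin:
  assumes k: "k < m" and small: "lyap y \<le> 1"
  shows "(\<Sum>w\<in>P k. \<Sum>z\<in>P k. a w z * (intra_diff k y w z)\<^sup>2) / 2
       \<le> (\<Sum>w\<in>P k. \<Sum>z\<in>P k. a w z * sin (intra_diff k y w z) * intra_diff k y w z)"
  unfolding sum_divide_distrib
proof (intro sum_mono)
  fix w z assume w: "w \<in> P k" and z: "z \<in> P k"
  have "(intra_diff k y w z)\<^sup>2 \<le> 1" using intra_diff_sq_le_lyap[OF k w z, of y] small by simp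
  then have "(intra_diff k y w z)\<^sup>2 / 2 \<le> intra_diff k y w z * sin (intra_diff k y w z)"
    by (intro sin_mult_self_ge) (simp add: abs_square_le_1)
  moreover have "a w z \<ge> 0" using a_nonneg cluster_lt w z by blast
  ultimately show "a w z * (intra_diff k y w z)\<^sup>2 / 2 \<le> a w z * sin (intra_diff k y w z) * intra_diff k y w z"
    by (metis mult_left_mono mult.commute mult.left_commute times_divide_eq_right)
qed

lemma lyap_deriv_le:
  assumes small: "lyap y \<le> 1"
  shows "lyap_deriv y \<le> - min_weight * sqnorm y"
proof -
  have "- 2 * cluster_size k * (\<Sum>w\<in>P k. \<Sum>z\<in>P k. a w z * sin (intra_diff k y w z) * intra_diff k y w z)
       \<le> - min_weight * (\<Sum>e\<in>Espan k. (y e)\<^sup>2)" if k: "k < m" for k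
  proof -
    let ?S = "\<Sum>w\<in>P k. \<Sum>z\<in>P k. a w z * sin (intra_diff k y w z) * intra_diff k y w z"
    let ?T = "\<Sum>w\<in>P k. \<Sum>z\<in>P k. a w z * (intra_diff k y w z)\<^sup>2"
    have N: "cluster_size k \<ge> 1"
      using clusters_nonempty k finite_cluster by (simp add: cluster_size_def Suc_le_eq card_gt_0_iff)
    have T: "?T \<ge> 0"
      using a_nonneg cluster_lt by (auto intro!: sum_nonneg)
    have "cluster_size k * (?T / 2) \<le> cluster_size k * ?S"
      using sum_weighted_sq_le_sin[OF k small] N by (intro mult_left_mono) auto
    moreover have "1 * ?T \<le> cluster_size k * ?T" using mult_right_mono[OF N T] .
    ultimately show ?thesis
      using min_weight_sum_span_le[OF k, of y] by linarith
  qed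
  then have "lyap_deriv y \<le> (\<Sum>k<m. - min_weight * (\<Sum>e\<in>Espan k. (y e)\<^sup>2))"
    unfolding lyap_deriv_eq by (intro sum_mono) simp
  also have "\<dots> = - min_weight * sqnorm y" by (simp add: sqnorm_split sum_distrib_left)
  finally show ?thesis .
qed

lemma lyap_nonneg: "lyap y \<ge> 0" unfolding lyap_def by (intro sum_nonneg) auto

lemma setnorm_eq_sqrt_sqnorm: "setnorm EI y = sqrt (sqnorm y)" by (simp add: setnorm_def sqnorm_def)

lemma lyap_has_derivative:
  assumes hx: "\<forall>e\<in>EI. ((\<lambda>s. x s e) has_real_derivative F_intra (x t) e) (at t within {0..})"
  shows "((\<lambda>s. lyap (x s)) has_real_derivative lyap_deriv (x t)) (at t within {0..})"
proof -
  have hx': "((\<lambda>s. x s e) has_real_derivative F_intra (x t) e) (at t within {0..})"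
    if "k \<in> {..<m}" "e \<in> Espan k" for k e
    using hx Espan_subset_EI that by auto
  show ?thesis unfolding lyap_def lyap_deriv_def intra_diff_def
    by (auto intro!: derivative_eq_intros hx' simp: mult_ac)
qed

lemma F_intra_zero: "e \<in> EI \<Longrightarrow> F_intra (\<lambda>_. 0) e = 0"
proof -
  assume e: "e \<in> EI"
  define k where "k = c (fst e)"
  have k: "k < m" and ek: "e \<in> Espan k" using EI_in_span[OF e] k_def by auto
  have "coupling k (\<lambda>_. 0) u = 0" for u by (simp add: coupling_def intra_diff_def)
  then show ?thesis using F_intra_eq_coupling[OF k ek] by simp
qed

lemma lyap_exp_decay:
  assumes hx: "\<forall>e\<in>EI. \<forall>t\<ge>0. ((\<lambda>s. x s e) has_real_derivative F_intra (x t) e) (at t within {0..})"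
    and x0: "lyap (x 0) < 1" and t: "t \<ge> 0"
  shows "lyap (x t) \<le> lyap (x 0) * exp (- (min_weight / lyap_const) * t)"
proof -
  define W where "W s = lyap (x s)" for s
  define \<alpha> where "\<alpha> = min_weight / lyap_const"
  have \<alpha>_pos: "\<alpha> > 0" using min_weight_pos lyap_const_pos by (simp add: \<alpha>_def)
  have W_deriv_within: "(W has_real_derivative lyap_deriv (x s)) (at s within {0..})" if "s \<ge> 0" for s
    unfolding W_def by (rule lyap_has_derivative) (use hx that in auto)
  have W_cont: "continuous_on {0..} W"
    by (rule DERIV_continuous_on[OF W_deriv_within]) simp
  have W_deriv: "(W has_real_derivative lyap_deriv (x s)) (at s)" if "s > 0" for s
    using W_deriv_within[of s] that by (simp add: at_within_interior[of s "{0..}"])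
  have decay: "lyap_deriv (x s) \<le> - \<alpha> * W s" if "W s \<le> 1" for s
  proof -
    have "lyap_deriv (x s) \<le> - min_weight * sqnorm (x s)"
      by (rule lyap_deriv_le) (use that in \<open>simp add: W_def\<close>)
    moreover have "W s / lyap_const \<le> sqnorm (x s)"
      using lyap_le[of "x s"] lyap_const_pos by (simp add: W_def divide_le_eq mult.commute)
    then have "min_weight * (W s / lyap_const) \<le> min_weight * sqnorm (x s)"
      using min_weight_pos by (intro mult_left_mono) auto
    ultimately show ?thesis by (simp add: \<alpha>_def)
  qed
  have below: "W s < 1" if "s \<ge> 0" for s
  proof (rule below_level_if_deriv_nonpos[OF W_cont W_deriv _ _ that])
    show "lyap_deriv (x s) \<le> 0" if "W s < 1" for s
      using decay[of s] that mult_nonneg_nonneg[OF less_imp_le[OF \<alpha>_pos] lyap_nonneg[of "x s"]]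
      by (simp add: W_def)
  qed (use x0 W_def in auto)
  have "W t \<le> W 0 * exp (- \<alpha> * t)"
    by (rule exp_decay_if_deriv_le[OF W_cont W_deriv _ t]) (use decay below in \<open>auto intro: less_imp_le\<close>)
  then show ?thesis by (simp add: W_def \<alpha>_def)
qed

lemma F_intra_exp_bound:
  assumes hx: "\<forall>e\<in>EI. \<forall>t\<ge>0. ((\<lambda>s. x s e) has_real_derivative F_intra (x t) e) (at t within {0..})"
    and x0: "setnorm EI (x 0) < sqrt (1 / (2 * lyap_const))" and t: "t \<ge> 0"
  shows "setnorm EI (x t) \<le> sqrt lyap_const * exp (- (min_weight / lyap_const / 2) * t) * setnorm EI (x 0)"
proof -
  have "sqnorm (x 0) < 1 / (2 * lyap_const)"
    using x0 by (simp add: setnorm_eq_sqrt_sqnorm)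
  then have "lyap_const * sqnorm (x 0) < 1 / 2"
    using lyap_const_pos by (simp add: field_simps)
  then have lyap0: "lyap (x 0) \<le> lyap_const * sqnorm (x 0)" "lyap (x 0) < 1"
    using lyap_le[of "x 0"] by auto
  define E where "E = exp (- (min_weight / lyap_const) * t)"
  have "sqnorm (x t) \<le> lyap (x t)" by (rule sqnorm_le_lyap)
  also have "\<dots> \<le> lyap (x 0) * E" unfolding E_def by (rule lyap_exp_decay[OF hx lyap0(2) t])
  also have "\<dots> \<le> lyap_const * sqnorm (x 0) * E" by (rule mult_right_mono[OF lyap0(1)]) (simp add: E_def)
  finally have "sqrt (sqnorm (x t)) \<le> sqrt lyap_const * sqrt E * sqrt (sqnorm (x 0))"
    by (simp add: real_sqrt_mult[symmetric] mult_ac)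
  moreover have "sqrt E = exp (- (min_weight / lyap_const / 2) * t)"
    unfolding E_def by (rule real_sqrt_unique) (simp_all add: power2_eq_square exp_add[symmetric])
  ultimately show ?thesis
    by (simp add: setnorm_eq_sqrt_sqnorm mult_ac)
qed

lemma F_intra_exp_stable: "exp_stable_origin EI F_intra"
proof -
  have "sqrt (1 / (2 * lyap_const)) > 0" "min_weight / lyap_const / 2 > 0"
    using lyap_const_pos min_weight_pos by auto
  then show ?thesis
    unfolding exp_stable_origin_def using F_intra_zero F_intra_exp_bound by blast
qed

section \<open>Interconnection gains\<close>

definition rep :: "nat \<Rightarrow> nat" where
  "rep k = (SOME i. i \<in> P k)"

lemma rep_in: "k < m \<Longrightarrow> rep k \<in> P k"
  unfolding rep_def using clusters_nonempty by (metis some_in_eq)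

lemma gamma_tilde_indep:
  assumes k: "k < m" and l: "l < m" and i: "i \<in> P k" and i': "i' \<in> P k"
  shows "gamma_tilde n m c a k l i = gamma_tilde n m c a k l i'"
proof -
  have eq: "(\<Sum>j\<in>P l'. a i j) = (\<Sum>j\<in>P l'. a i' j)" if "l' < m" "l' \<noteq> k" for l'
  proof -
    have "(\<Sum>j\<in>P l'. a i j - a i' j) = 0" using A3 k that i i' by blast
    then show ?thesis by (simp add: sum_subtractf)
  qed
  show ?thesis
  proof (cases "l = k")
    case True
    then show ?thesis unfolding gamma_tilde_def using eq by (auto intro!: sum.cong)
  next
    case False
    then show ?thesis unfolding gamma_tilde_def using eq[OF l] by auto
  qed
qed

lemma gamma_tilde_nonneg: "i < n \<Longrightarrow> gamma_tilde n m c a k l i \<ge> 0"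
  unfolding gamma_tilde_def using a_nonneg cluster_lt by (auto intro!: sum_nonneg)

lemma abs_tdiff_le:
  assumes l: "l < m" and u: "u \<in> P l" and w: "w \<in> P l"
  shows "\<bar>tdiff ET y u w\<bar> \<le> (\<Sum>e\<in>Espan l. \<bar>y e\<bar>)"
proof -
  interpret K: oriented_tree "P l" "Espan l" by (rule oriented_tree_span[OF l])
  interpret T: oriented_tree "{..<n}" ET by (rule oriented_tree_T)
  obtain p where p: "is_tree_path (Espan l) u w p" using K.path_exists u w by blast
  have pw: "is_walk (Espan l) p" "p \<noteq> []" "hd p = u" "last p = w" "distinct p"
    using p by (auto simp: is_tree_path_iff_walk)
  have pT: "is_walk ET p" using is_walk_mono[OF pw(1)] Espan_subset_EI[OF l] EI_subset_ET by blast
  have "tdiff ET y u w = path_diff y p" using T.tdiff_walk[OF pT pw(2)] pw u cluster_lt by simp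
  also have "\<bar>\<dots>\<bar> \<le> (\<Sum>e\<in>Espan l. \<bar>y e\<bar>)"
    by (rule abs_path_diff_le[OF pw(1) pw(5) finite_Espan[OF l]]) (use Espan_edgeD[OF l] in auto)
  finally show ?thesis .
qed

definition max_intra :: "nat" where
  "max_intra = Max ((\<lambda>r. card (P r) - 1) ` {..<m})"

lemma card_Espan_le: "l < m \<Longrightarrow> card (Espan l) \<le> max_intra"
proof -
  assume l: "l < m"
  have "card (Espan l) = card (P l) - 1" using span_k l by (simp add: is_spanning_tree_def)
  also have "\<dots> \<le> max_intra" unfolding max_intra_def using l by (intro Max_ge) auto
  finally show ?thesis .
qed

lemma sum_outside_cluster:
  assumes k: "k < m"
  shows "(\<Sum>z\<in>{..<n} - P k. f z) = (\<Sum>l\<in>{..<m} - {k}. \<Sum>z\<in>P l. f z)"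
proof -
  have U: "{..<n} - P k = (\<Union>l\<in>{..<m} - {k}. P l)" using c_range by (auto simp: in_cluster)
  show ?thesis unfolding U
    by (rule sum.UNION_disjoint) (auto simp: finite_cluster in_cluster)
qed

lemma abs_sin_tdiff_cross_diff_le:
  assumes k: "k < m" and l: "l < m" and u: "u \<in> P k" "v \<in> P k" and z: "z \<in> P l" "w \<in> P l"
  shows "\<bar>sin (tdiff ET y u z) - sin (tdiff ET y v w)\<bar> \<le> (\<Sum>e\<in>Espan l. \<bar>y e\<bar>) + (\<Sum>e\<in>Espan k. \<bar>y e\<bar>)"
proof -
  interpret T: oriented_tree "{..<n}" ET by (rule oriented_tree_T)
  have "tdiff ET y u z - tdiff ET y v w = tdiff ET y w z - tdiff ET y v u"
    using T.tdiff_root[of v u z y] T.tdiff_root[of v w z y] u z cluster_lt by simp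
  then have "\<bar>sin (tdiff ET y u z) - sin (tdiff ET y v w)\<bar> \<le> \<bar>tdiff ET y w z - tdiff ET y v u\<bar>"
    using abs_sin_diff_le by metis
  also have "\<dots> \<le> \<bar>tdiff ET y w z\<bar> + \<bar>tdiff ET y v u\<bar>" by (rule abs_triangle_ineq4)
  also have "\<dots> \<le> (\<Sum>e\<in>Espan l. \<bar>y e\<bar>) + (\<Sum>e\<in>Espan k. \<bar>y e\<bar>)"
    by (intro add_mono abs_tdiff_le) (use k l u z in auto)
  finally show ?thesis .
qed

lemma abs_cross_cluster_coupling_le:
  assumes k: "k < m" and l: "l < m" "l \<noteq> k" and ij: "i \<in> P k" "j \<in> P k"
  shows "\<bar>\<Sum>z\<in>P l. a j z * sin (tdiff ET y j z) - a i z * sin (tdiff ET y i z)\<bar>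
         \<le> 2 * (\<Sum>z\<in>P l. a i z) * ((\<Sum>e\<in>Espan l. \<bar>y e\<bar>) + (\<Sum>e\<in>Espan k. \<bar>y e\<bar>))"
proof -
  define B where "B = (\<Sum>e\<in>Espan l. \<bar>y e\<bar>) + (\<Sum>e\<in>Espan k. \<bar>y e\<bar>)"
  define C where "C = sin (tdiff ET y i (rep l))"
  define dev where "dev u = (\<Sum>z\<in>P l. a u z * (sin (tdiff ET y u z) - C))" for u
  have dev_le: "\<bar>dev u\<bar> \<le> (\<Sum>z\<in>P l. a u z) * B" if u: "u \<in> P k" for u
  proof -
    have "\<bar>dev u\<bar> \<le> (\<Sum>z\<in>P l. \<bar>a u z * (sin (tdiff ET y u z) - C)\<bar>)"
      unfolding dev_def by (rule sum_abs)
    also have "\<dots> \<le> (\<Sum>z\<in>P l. a u z * B)"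
    proof (intro sum_mono)
      fix z assume z: "z \<in> P l"
      have "\<bar>sin (tdiff ET y u z) - C\<bar> \<le> B"
        unfolding B_def C_def by (rule abs_sin_tdiff_cross_diff_le[OF k l(1) u ij(1) z rep_in[OF l(1)]])
      then show "\<bar>a u z * (sin (tdiff ET y u z) - C)\<bar> \<le> a u z * B"
        using a_nonneg[OF cluster_lt[OF u] cluster_lt[OF z]] by (simp add: abs_mult mult_left_mono)
    qed
    finally show ?thesis by (simp add: sum_distrib_right)
  qed
  have "(\<Sum>z\<in>P l. a j z - a i z) = 0" using A3 k l ij by blast
  then have same_total: "(\<Sum>z\<in>P l. a j z) = (\<Sum>z\<in>P l. a i z)" by (simp add: sum_subtractf)
  have "(\<Sum>z\<in>P l. a j z * sin (tdiff ET y j z) - a i z * sin (tdiff ET y i z))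
      = (\<Sum>z\<in>P l. (a j z * (sin (tdiff ET y j z) - C) - a i z * (sin (tdiff ET y i z) - C))
          + C * (a j z - a i z))"
    by (intro sum.cong refl) (simp add: algebra_simps)
  also have "\<dots> = dev j - dev i + C * ((\<Sum>z\<in>P l. a j z) - (\<Sum>z\<in>P l. a i z))"
    by (simp add: dev_def sum.distrib sum_subtractf flip: sum_distrib_left)
  also have "\<dots> = dev j - dev i" using same_total by simp
  finally have "\<bar>\<Sum>z\<in>P l. a j z * sin (tdiff ET y j z) - a i z * sin (tdiff ET y i z)\<bar> \<le> \<bar>dev j\<bar> + \<bar>dev i\<bar>"
    by simp
  also have "\<dots> \<le> 2 * (\<Sum>z\<in>P l. a i z) * B"
    using dev_le[OF ij(2)] dev_le[OF ij(1)] same_total by simp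
  finally show ?thesis unfolding B_def .
qed

lemma abs_G_entry_le:
  assumes k: "k < m" and e: "e \<in> Espan k"
  shows "\<bar>Gcomp n c a ET y e\<bar> \<le> 2 * (\<Sum>l<m. gamma_tilde n m c a k l (rep k) * (\<Sum>e'\<in>Espan l. \<bar>y e'\<bar>))"
proof -
  define i where "i = fst e"
  define j where "j = snd e"
  have ij: "i \<in> P k" "j \<in> P k" and ck: "c i = k"
    using Espan_edge_cluster[OF k e] by (auto simp: in_cluster i_def j_def)
  define S where "S l = (\<Sum>e'\<in>Espan l. \<bar>y e'\<bar>)" for l
  define gt where "gt l = gamma_tilde n m c a k l (rep k)" for l
  define L where "L = {..<m} - {k}"
  have gt_cross: "gt l = (\<Sum>z\<in>P l. a i z)" if "l \<in> L" for l
    using gamma_tilde_indep[OF k _ rep_in[OF k] ij(1), of l] that by (simp add: gt_def gamma_tilde_def L_def)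
  have "Gcomp n c a ET y e = (\<Sum>l\<in>L. \<Sum>z\<in>P l. a j z * sin (tdiff ET y j z) - a i z * sin (tdiff ET y i z))"
    unfolding Gcomp_def L_def i_def j_def using ck by (simp add: i_def sum_outside_cluster[OF k])
  then have "\<bar>Gcomp n c a ET y e\<bar>
      \<le> (\<Sum>l\<in>L. \<bar>\<Sum>z\<in>P l. a j z * sin (tdiff ET y j z) - a i z * sin (tdiff ET y i z)\<bar>)"
    by (simp add: sum_abs)
  also have "\<dots> \<le> (\<Sum>l\<in>L. 2 * gt l * (S l + S k))"
    using abs_cross_cluster_coupling_le[OF k _ _ ij] gt_cross by (intro sum_mono) (auto simp: L_def S_def)
  also have "\<dots> = 2 * ((\<Sum>l\<in>L. gt l * S l) + (\<Sum>l\<in>L. gt l) * S k)"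
    by (simp add: sum_distrib_left sum_distrib_right sum.distrib algebra_simps)
  also have "(\<Sum>l\<in>L. gt l) = gt k"
    unfolding gt_def gamma_tilde_def L_def by simp
  also have "(\<Sum>l\<in>L. gt l * S l) + gt k * S k = (\<Sum>l<m. gt l * S l)"
    using k by (simp add: L_def sum.remove[of "{..<m}" k])
  finally show ?thesis unfolding gt_def S_def .
qed

lemma G_norm_le:
  assumes k: "k < m"
  shows "setnorm (Espan k) (Gcomp n c a ET (\<lambda>e. if e \<in> EI then xi e else if e \<in> Einter then xe e else 0))
        \<le> (\<Sum>l<m. gamma n m c a k l * setnorm (Espan l) xi)"
proof -
  define y where "y = (\<lambda>e. if e \<in> EI then xi e else if e \<in> Einter then xe e else 0)"
  define gt where "gt l = gamma_tilde n m c a k l (rep k)" for l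
  have gtnn: "gt l \<ge> 0" for l
    unfolding gt_def by (rule gamma_tilde_nonneg) (use rep_in[OF k] cluster_lt in auto)
  have Sy: "(\<Sum>e'\<in>Espan l. \<bar>y e'\<bar>) \<le> sqrt (real max_intra) * setnorm (Espan l) xi" if l: "l < m" for l
  proof -
    have "(\<Sum>e'\<in>Espan l. \<bar>y e'\<bar>) = (\<Sum>e'\<in>Espan l. \<bar>xi e'\<bar>)"
      using Espan_subset_EI[OF l] by (intro sum.cong refl) (auto simp: y_def)
    also have "\<dots> \<le> sqrt (real (card (Espan l))) * setnorm (Espan l) xi"
      by (rule sum_abs_le_sqrt_card_setnorm)
    also have "\<dots> \<le> sqrt (real max_intra) * setnorm (Espan l) xi"
      by (rule mult_right_mono) (use card_Espan_le[OF l] in \<open>auto simp: setnorm_def intro!: sum_nonneg\<close>)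
    finally show ?thesis .
  qed
  define B where "B = 2 * (\<Sum>l<m. gt l * (sqrt (real max_intra) * setnorm (Espan l) xi))"
  have Bnn: "B \<ge> 0" unfolding B_def using gtnn by (auto intro!: sum_nonneg mult_nonneg_nonneg simp: setnorm_def)
  have entry: "\<bar>Gcomp n c a ET y e\<bar> \<le> B" if e: "e \<in> Espan k" for e
  proof -
    have "\<bar>Gcomp n c a ET y e\<bar> \<le> 2 * (\<Sum>l<m. gt l * (\<Sum>e'\<in>Espan l. \<bar>y e'\<bar>))"
      unfolding gt_def by (rule abs_G_entry_le[OF k e])
    also have "\<dots> \<le> B" unfolding B_def using Sy gtnn by (auto intro!: sum_mono mult_left_mono)
    finally show ?thesis .
  qed
  have "(\<Sum>e\<in>Espan k. (Gcomp n c a ET y e)\<^sup>2) \<le> real (card (Espan k)) * B\<^sup>2"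
  proof (rule sum_bounded_above)
    fix e assume "e \<in> Espan k"
    then have "\<bar>Gcomp n c a ET y e\<bar> \<le> B" by (rule entry)
    then have "\<bar>Gcomp n c a ET y e\<bar>\<^sup>2 \<le> B\<^sup>2" by (rule power_mono) simp
    then show "(Gcomp n c a ET y e)\<^sup>2 \<le> B\<^sup>2" by simp
  qed
  then have "setnorm (Espan k) (Gcomp n c a ET y) \<le> sqrt (real (card (Espan k)) * B\<^sup>2)"
    unfolding setnorm_def by simp
  also have "\<dots> = sqrt (real (card (Espan k))) * B" using Bnn by (simp add: real_sqrt_mult)
  also have "\<dots> \<le> sqrt (real max_intra) * B" using card_Espan_le[OF k] Bnn by (intro mult_right_mono) auto
  also have "\<dots> = (\<Sum>l<m. (2 * real max_intra * gt l) * setnorm (Espan l) xi)"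
  proof -
    have "sqrt (real max_intra) * sqrt (real max_intra) = real max_intra" by simp
    then show ?thesis unfolding B_def by (simp add: sum_distrib_left mult_ac)
  qed
  also have "\<dots> = (\<Sum>l<m. gamma n m c a k l * setnorm (Espan l) xi)"
    unfolding gamma_def gt_def rep_def max_intra_def by simp
  finally show ?thesis unfolding y_def .
qed

end

theorem lemma1:
  fixes n m :: nat and a :: "nat \<Rightarrow> nat \<Rightarrow> real" and \<omega> :: "nat \<Rightarrow> real"
    and c :: "nat \<Rightarrow> nat" and Espan :: "nat \<Rightarrow> (nat \<times> nat) set"
    and Einter :: "(nat \<times> nat) set"
  defines "EI \<equiv> (\<Union>k<m. Espan k)"
  defines "ET \<equiv> EI \<union> Einter"
  defines "F \<equiv> (\<lambda>x. Fcomp n c a ET (ext_edges EI x))"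
  defines "G \<equiv> (\<lambda>xi xe. Gcomp n c a ET (\<lambda>e. if e \<in> EI then xi e else if e \<in> Einter then xe e else 0))"
  defines "J \<equiv> (\<lambda>e e'. if c (fst e) = c (fst e') then J_blk n c a Espan (c (fst e)) e e' else 0)"
  assumes sym: "\<forall>i<n. \<forall>j<n. a i j = a j i"
    and nonneg: "\<forall>i<n. \<forall>j<n. a i j \<ge> 0"
    and noloop: "\<forall>i<n. a i i = 0"
    and conn: "ug_connected {..<n} (graph_edges a {..<n})"
    and omega_pos: "\<forall>i<n. \<omega> i > 0"
    and m_gt1: "m > 1"
    and c_range: "\<forall>i<n. c i < m"
    and clusters_nonempty: "\<forall>k<m. cluster n c k \<noteq> {}"
    and A2: "\<forall>i<n. \<forall>j<n. c i = c j \<longrightarrow> \<omega> i = \<omega> j"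
    and A3: "\<forall>z<m. \<forall>l<m. z \<noteq> l \<longrightarrow>
               (\<forall>i\<in>cluster n c z. \<forall>j\<in>cluster n c z. (\<Sum>k\<in>cluster n c l. a i k - a j k) = 0)"
    and sub_conn: "\<forall>k<m. ug_connected (cluster n c k) (graph_edges a (cluster n c k))"
    and span_k: "\<forall>k<m. is_spanning_tree (cluster n c k) (graph_edges a (cluster n c k)) (Espan k)"
    and inter_card: "card Einter = m - 1"
    and span_T: "is_spanning_tree {..<n} (graph_edges a {..<n}) ET"
  shows "(\<forall>e\<in>EI. \<forall>e'\<in>EI.
            ((\<lambda>t. F (\<lambda>f. if f = e' then t else 0) e) has_real_derivative J e e') (at 0))
       \<and> is_hurwitz EI J
       \<and> exp_stable_origin EI F
       \<and> (\<forall>k<m. \<forall>l<m. \<forall>i\<in>cluster n c k. \<forall>i'\<in>cluster n c k.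
            gamma_tilde n m c a k l i = gamma_tilde n m c a k l i')
       \<and> (\<forall>k<m. \<forall>xi xe. setnorm (Espan k) (G xi xe)
            \<le> (\<Sum>l<m. gamma n m c a k l * setnorm (Espan l) xi))"
proof -
  interpret K: kuramoto_clusters n m a c Espan Einter
    using sym nonneg noloop c_range clusters_nonempty A3 span_k span_T
    by unfold_locales (simp_all add: assms(1,2))
  have F_eq: "F = K.F_intra" and J_eq: "J = K.jac"
    unfolding assms(1-3,5) K.F_intra_def K.jac_def by (simp_all add: fun_eq_iff)
  show ?thesis
    unfolding F_eq J_eq assms(1,2,4)
  proof (intro conjI)
    show "\<forall>e\<in>K.EI. \<forall>e'\<in>K.EI.
        ((\<lambda>t. K.F_intra (\<lambda>f. if f = e' then t else 0) e) has_real_derivative K.jac e e') (at 0)"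
      using K.F_intra_partial_deriv by blast
  qed (use K.jac_hurwitz K.F_intra_exp_stable K.gamma_tilde_indep K.G_norm_le in blast)+
qed

end
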